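(* Let $(\mathcal X,\mathcal Y)$ be a nice couple and $G$ a group, and consider the PMQ-group pair $(G,G)$. Then $\mathrm{Id}_{\mathbb C}$ is a morphism of nice couples $(\mathcal X,\mathcal Y)\to(\mathcal X,\mathcal X)$, and the induced map $(\mathrm{Id}_{\mathbb C})_*:\mathrm{Hur}(\mathcal X,\mathcal Y;G,G)\to\mathrm{Hur}(\mathcal X,\mathcal X;G,G)$, $(P,\psi,\phi)\mapsto(P,\psi|_{\mathfrak Q_{(\mathcal X,\mathcal X)}(P)},\phi)$, is a homeomorphism.
   Context: Conventions: $*:=-\sqrt{-1}\in\mathbb C$ is the basepoint; $\mathbb H=\{z\in\mathbb C:\operatorname{Im}z\ge0\}$. A subset of $\mathbb C$ is semi-algebraic if it is a finite union of sets each defined by finitely many real polynomial equalities and (weak or strict) inequalities in $\operatorname{Re}z,\operatorname{Im}z$; a continuous map is semi-algebraic if its domain is a finite union of semi-algebraic pieces on each of which its coordinates are quotients of real polynomials. A nice couple is a pair $\mathfrak T=(\mathcal X,\mathcal Y)$ of semi-algebraic sets $\mathcal Y\subseteq\mathcal X\subseteq\mathbb H$ with $\mathcal Y$ closed in $\mathcal X$. A morphism of nice couples $(\mathcal X,\mathcal Y)\to(\mathcal X',\mathcal Y')$ is a continuous map $\xi:\mathbb C\to\mathbb C$ with $\xi( * )=*$ which is semi-algebraic, proper, induces the identity on $H^2_c(\mathbb C)$, satisfies $\xi(\mathcal X)\subseteq\mathcal X'$, $\xi(\mathcal Y)\subseteq\mathcal Y'$, has non-empty compact contractible fibres, and such that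 for $z\in\mathcal X'\setminus\mathcal Y'$ the fibre $\xi^{-1}(z)$ contains at most one point of $\mathcal X\setminus\mathcal Y$. PMQ-group pair $(G,G)$: the group $G$ regarded as a PMQ with everywhere defined product and conjugation $g^h=h^{-1}gh$, the map $\mathfrak e=\mathrm{Id}_G$, and $G$ acting on itself by right conjugation. Configurations: for a nice couple $\mathfrak T$ and finite $P\subset\mathcal X$, $\mathfrak G(P)=\pi_1(\mathbb C\setminus P,* )$; $\mathfrak Q_{\mathfrak T}(P)$ is $\{\mathbb1\}$ with the conjugacy classes of small clockwise simple loops around single points of $P\setminus\mathcal Y$; $\mathfrak Q^{\mathrm{ext}}(P)$ is the union of conjugacy classes of clockwise simple closed curves in $\mathbb C\setminus(P\cup\mathcal Y)$ bounding a disc in $\mathbb C\setminus\mathcal Y$; each of its elements $g$ is a product $g_1\cdots g_r$ of elements of $\mathfrak Q(P)$, and $\psi^{\mathrm{ext}}(g):=\psi(g_1)\cdots\psi(g_r)$ (here always defined since $G$ is complete). Hurwitz space: for a PMQ-group pair $(Q,G)$ (here $(G,G)$), $\mathrm{Hur}(\mathfrak T;Q,G)$ is the set of triples $(P,\psi,\phi)$, $P\subset\mathcal X$ finite, $\phi:\mathfrak G(P)\to G$ a homomorphism, $\psi:\mathfrak Q_{\mathfrak T}(P)\to Q$ with $\psi(\mathbb1)=\mathbb1$, $\mathfrak e\circ\psi=\phi|_{\mathfrak Q(P)}$ and $\psi(h^{-1}xh)=\psi(x)^{\phi(h)}$. Its topology has as basis the normal neighbourhoods $\mathfrak U(\mathfrak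 c;\underline U)$: for $\mathfrak c=(P,\psi,\phi)$, $P=\{z_1,\dots,z_k\}$, and an adapted covering $\underline U=(U_1,\dots,U_k)$ (convex semi-algebraic open subsets of $\mathbb C\setminus\{*\}$ with compact pairwise disjoint closures not containing $*$, $U_i\cap P=\{z_i\}$, $\overline{U_i}\cap\mathcal Y=\emptyset$ when $z_i\notin\mathcal Y$), it is the set of $(P',\psi',\phi')$ with $P'\subset\bigcup U_i$ meeting each $U_i$, $\phi'\circ\iota=\phi$ and $(\psi')^{\mathrm{ext}}\circ\iota=\psi$ on $\mathfrak Q(P)$, where $\iota:\mathfrak G(P)\cong\pi_1(\mathbb C\setminus\bigcup U_i,* )\to\mathfrak G(P')$ is induced by inclusions. We write $\mathrm{Hur}(\mathcal X,\mathcal Y;Q,G)=\mathrm{Hur}((\mathcal X,\mathcal Y);Q,G)$. *)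

theory Defs
  imports "HOL-Complex_Analysis.Complex_Analysis" "HOL-Homology.Homology"
begin

definition bp :: complex where "bp = - \<i>"

definition upper_half :: "complex set" where "upper_half = {z. Im z \<ge> 0}"

inductive_set polyfun :: "(real \<times> real \<Rightarrow> real) set" where
  pf_const: "(\<lambda>p. c) \<in> polyfun"
| pf_fst: "fst \<in> polyfun"
| pf_snd: "snd \<in> polyfun"
| pf_add: "f \<in> polyfun \<Longrightarrow> g \<in> polyfun \<Longrightarrow> (\<lambda>p. f p + g p) \<in> polyfun"
| pf_mult: "f \<in> polyfun \<Longrightarrow> g \<in> polyfun \<Longrightarrow> (\<lambda>p. f p * g p) \<in> polyfun"

definition basic_semialg :: "complex set \<Rightarrow> bool" where
  "basic_semialg A \<longleftrightarrow> (\<exists>Eq Le Lt. finite Eq \<and> finite Le \<and> finite Lt \<and>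
      Eq \<subseteq> polyfun \<and> Le \<subseteq> polyfun \<and> Lt \<subseteq> polyfun \<and>
      A = {z. (\<forall>f\<in>Eq. f (Re z, Im z) = 0) \<and> (\<forall>f\<in>Le. f (Re z, Im z) \<ge> 0)
              \<and> (\<forall>f\<in>Lt. f (Re z, Im z) > 0)})"

definition semialg :: "complex set \<Rightarrow> bool" where
  "semialg A \<longleftrightarrow> (\<exists>B. finite B \<and> (\<forall>S\<in>B. basic_semialg S) \<and> A = \<Union>B)"

definition semialg_map :: "(complex \<Rightarrow> complex) \<Rightarrow> bool" where
  "semialg_map \<xi> \<longleftrightarrow> (\<exists>Ps. finite Ps \<and> (\<forall>S\<in>Ps. semialg S) \<and> \<Union>Ps = UNIV \<and>
      (\<forall>S\<in>Ps. \<exists>p1 q1 p2 q2. p1 \<in> polyfun \<and> q1 \<in> polyfun \<and> p2 \<in> polyfun \<and> q2 \<in> polyfun \<and>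
         (\<forall>z\<in>S. q1 (Re z, Im z) \<noteq> 0 \<and> q2 (Re z, Im z) \<noteq> 0 \<and>
                 Re (\<xi> z) = p1 (Re z, Im z) / q1 (Re z, Im z) \<and>
                 Im (\<xi> z) = p2 (Re z, Im z) / q2 (Re z, Im z))))"

definition nice_couple :: "complex set \<Rightarrow> complex set \<Rightarrow> bool" where
  "nice_couple X Y \<longleftrightarrow> semialg X \<and> semialg Y \<and> Y \<subseteq> X \<and> X \<subseteq> upper_half \<and>
      closedin (top_of_set X) Y"

text \<open>Action on H^2_c(C): via the one-point compactification C^+ = S^2 (inverse
stereographic projection from the north pole), a proper map acts on H^2_c(C) = H^2(S^2)
by its Brouwer degree.\<close>

definition stereo :: "complex \<Rightarrow> nat \<Rightarrow> real" where
  "stereo z = (\<lambda>i. if i = 0 then 2 * Re z / (1 + (cmod z)\<^sup>2)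
                 else if i = 1 then 2 * Im z / (1 + (cmod z)\<^sup>2)
                 else if i = 2 then ((cmod z)\<^sup>2 - 1) / ((cmod z)\<^sup>2 + 1) else 0)"

definition north_pole :: "nat \<Rightarrow> real" where
  "north_pole = (\<lambda>i. if i = 2 then 1 else 0)"

definition unstereo :: "(nat \<Rightarrow> real) \<Rightarrow> complex" where
  "unstereo x = Complex (x 0 / (1 - x 2)) (x 1 / (1 - x 2))"

definition sphere_ext :: "(complex \<Rightarrow> complex) \<Rightarrow> (nat \<Rightarrow> real) \<Rightarrow> nat \<Rightarrow> real" where
  "sphere_ext \<xi> x = (if x 2 = 1 then north_pole else stereo (\<xi> (unstereo x)))"

definition nc_morphism ::
  "complex set \<Rightarrow> complex set \<Rightarrow> complex set \<Rightarrow> complex set \<Rightarrow> (complex \<Rightarrow> complex) \<Rightarrow> bool" where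
  "nc_morphism X Y X' Y' \<xi> \<longleftrightarrow>
     continuous_on UNIV \<xi> \<and> \<xi> bp = bp \<and> semialg_map \<xi> \<and>
     (\<forall>K. compact K \<longrightarrow> compact (\<xi> -` K)) \<and>
     Brouwer_degree2 2 (sphere_ext \<xi>) = 1 \<and>
     \<xi> ` X \<subseteq> X' \<and> \<xi> ` Y \<subseteq> Y' \<and>
     (\<forall>z. \<xi> -` {z} \<noteq> {} \<and> compact (\<xi> -` {z}) \<and> contractible (\<xi> -` {z})) \<and>
     (\<forall>z \<in> X' - Y'. \<forall>a b. a \<in> \<xi> -` {z} \<inter> (X - Y) \<and> b \<in> \<xi> -` {z} \<inter> (X - Y) \<longrightarrow> a = b)"

type_synonym cls = "(real \<Rightarrow> complex) set"

definition fund_grp :: "complex set \<Rightarrow> complex \<Rightarrow> cls monoid" where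
  "fund_grp S a = \<lparr>carrier = {{h. homotopic_paths S g h} | g.
         path g \<and> path_image g \<subseteq> S \<and> pathstart g = a \<and> pathfinish g = a},
     mult = (\<lambda>A B. {h. \<exists>g\<in>A. \<exists>g'\<in>B. homotopic_paths S (g +++ g') h}),
     one = {h. homotopic_paths S (linepath a a) h}\<rparr>"

definition Gpi :: "complex set \<Rightarrow> cls monoid" where
  "Gpi P = fund_grp (- P) bp"

text \<open>Conjugacy class of small clockwise simple loops around z (in pi_1(C - P, bp)).\<close>
definition small_loops :: "complex set \<Rightarrow> complex \<Rightarrow> cls set" where
  "small_loops P z = {{h. homotopic_paths (- P) (\<alpha> +++ reversepath (circlepath z r) +++ reversepath \<alpha>) h}
      | \<alpha> r. r > 0 \<and> cball z r \<inter> P = {z} \<and> path \<alpha> \<and> path_image \<alpha> \<subseteq> - P \<and>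
             pathstart \<alpha> = bp \<and> pathfinish \<alpha> = pathstart (reversepath (circlepath z r))}"

definition Qset :: "complex set \<Rightarrow> complex set \<Rightarrow> cls set" where
  "Qset Y P = {\<one>\<^bsub>Gpi P\<^esub>} \<union> \<Union>{small_loops P z | z. z \<in> P - Y}"

text \<open>Conjugacy classes of clockwise simple closed curves in C - (P u Y) bounding a disc in C - Y.\<close>
definition Qext :: "complex set \<Rightarrow> complex set \<Rightarrow> cls set" where
  "Qext Y P = {{h. homotopic_paths (- P) (\<alpha> +++ \<gamma> +++ reversepath \<alpha>) h} | \<alpha> \<gamma>.
      simple_path \<gamma> \<and> pathfinish \<gamma> = pathstart \<gamma> \<and> path_image \<gamma> \<subseteq> - (P \<union> Y) \<and>
      (\<forall>w \<in> inside (path_image \<gamma>). winding_number \<gamma> w = -1) \<and>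
      path_image \<gamma> \<union> inside (path_image \<gamma>) \<subseteq> - Y \<and>
      path \<alpha> \<and> path_image \<alpha> \<subseteq> - P \<and> pathstart \<alpha> = bp \<and> pathfinish \<alpha> = pathstart \<gamma>}"

definition psi_ext :: "('g, 'b) monoid_scheme \<Rightarrow> complex set \<Rightarrow> complex set \<Rightarrow> (cls \<Rightarrow> 'g) \<Rightarrow> cls \<Rightarrow> 'g" where
  "psi_ext G Y P \<psi> g = (SOME x. \<exists>gs. set gs \<subseteq> Qset Y P \<and>
       g = foldr (\<lambda>a b. a \<otimes>\<^bsub>Gpi P\<^esub> b) gs \<one>\<^bsub>Gpi P\<^esub> \<and>
       x = foldr (\<lambda>a b. \<psi> a \<otimes>\<^bsub>G\<^esub> b) gs \<one>\<^bsub>G\<^esub>)"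

type_synonym 'g config = "complex set \<times> (cls \<Rightarrow> 'g) \<times> (cls \<Rightarrow> 'g)"

definition Hur :: "complex set \<Rightarrow> complex set \<Rightarrow> ('g, 'b) monoid_scheme \<Rightarrow> 'g config set" where
  "Hur X Y G = {(P, \<psi>, \<phi>). finite P \<and> P \<subseteq> X \<and>
      \<phi> \<in> hom (Gpi P) G \<and> \<phi> \<in> extensional (carrier (Gpi P)) \<and>
      \<psi> \<in> Qset Y P \<rightarrow> carrier G \<and> \<psi> \<in> extensional (Qset Y P) \<and>
      \<psi> \<one>\<^bsub>Gpi P\<^esub> = \<one>\<^bsub>G\<^esub> \<and>
      (\<forall>x \<in> Qset Y P. \<psi> x = \<phi> x) \<and>
      (\<forall>x \<in> Qset Y P. \<forall>h \<in> carrier (Gpi P).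
          \<psi> (inv\<^bsub>Gpi P\<^esub> h \<otimes>\<^bsub>Gpi P\<^esub> x \<otimes>\<^bsub>Gpi P\<^esub> h) = inv\<^bsub>G\<^esub> (\<phi> h) \<otimes>\<^bsub>G\<^esub> \<psi> x \<otimes>\<^bsub>G\<^esub> \<phi> h)}"

definition adapted :: "complex set \<Rightarrow> complex set \<Rightarrow> (complex \<Rightarrow> complex set) \<Rightarrow> bool" where
  "adapted Y P U \<longleftrightarrow> (\<forall>z \<in> P. convex (U z) \<and> open (U z) \<and> semialg (U z) \<and>
      compact (closure (U z)) \<and> bp \<notin> closure (U z) \<and> U z \<inter> P = {z} \<and>
      (z \<notin> Y \<longrightarrow> closure (U z) \<inter> Y = {}) \<and>
      (\<forall>z' \<in> P. z' \<noteq> z \<longrightarrow> closure (U z) \<inter> closure (U z') = {}))"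

text \<open>iota : G(P) = pi_1(C - U U_i) -> G(P'), induced by inclusions.\<close>
definition iota :: "(complex \<Rightarrow> complex set) \<Rightarrow> complex set \<Rightarrow> complex set \<Rightarrow> cls \<Rightarrow> cls" where
  "iota U P P' A = {h. \<exists>g \<in> A. path_image g \<subseteq> - (\<Union>(U ` P)) \<and> homotopic_paths (- P') g h}"

definition normal_nbhd ::
  "complex set \<Rightarrow> complex set \<Rightarrow> ('g, 'b) monoid_scheme \<Rightarrow> 'g config \<Rightarrow> (complex \<Rightarrow> complex set) \<Rightarrow> 'g config set" where
  "normal_nbhd X Y G c U = (case c of (P, \<psi>, \<phi>) \<Rightarrow>
     {(P', \<psi>', \<phi>') \<in> Hur X Y G. P' \<subseteq> \<Union>(U ` P) \<and> (\<forall>z \<in> P. P' \<inter> U z \<noteq> {}) \<and>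
        (\<forall>x \<in> carrier (Gpi P). \<phi>' (iota U P P' x) = \<phi> x) \<and>
        (\<forall>x \<in> Qset Y P. psi_ext G Y P' \<psi>' (iota U P P' x) = \<psi> x)})"

definition Hur_top :: "complex set \<Rightarrow> complex set \<Rightarrow> ('g, 'b) monoid_scheme \<Rightarrow> 'g config topology" where
  "Hur_top X Y G = topology_generated_by
     {normal_nbhd X Y G c U | c U. c \<in> Hur X Y G \<and> adapted Y (fst c) U}"

end

theory Submission
  imports Defs
begin

text \<open>
  On Hurwitz spaces the map only forgets
  the values of \<open>\<psi>\<close> on small loops around points of \<open>P - Y\<close>; since \<open>\<psi>\<close> agrees with \<open>\<phi>\<close> there, it is a
  bijection with inverse \<open>\<psi> := \<phi>\<close> on \<open>Q(P)\<close>. A normal neighbourhood for \<open>(X, X)\<close> puts no condition on \<open>\<psi>'\<close>,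
  whereas one for \<open>(X, Y)\<close> asks \<open>\<psi>'\<^sup>e\<^sup>x\<^sup>t(\<iota> x) = \<psi> x\<close> for small loops \<open>x\<close> around \<open>z \<notin> Y\<close>. This holds
  automatically once the new configuration \<open>P'\<close> lies in small balls: pushed into the complement of \<open>P'\<close>,
  the loop around \<open>z\<close> becomes the clockwise boundary of a square around \<open>z\<close>, and cutting the square along
  lines missing \<open>P'\<close> writes it as a product of small loops around points of \<open>P'\<close> near \<open>z\<close>, none of which
  lies in \<open>Y\<close>. Hence \<open>\<psi>'\<^sup>e\<^sup>x\<^sup>t(\<iota> x) = \<phi>'(\<iota> x) = \<phi> x = \<psi> x\<close>, and both the map and its inverse are
  continuous.
\<close>

lemma semialg_UNIV: "semialg UNIV"
proof -
  have "basic_semialg UNIV"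
    unfolding basic_semialg_def by (rule exI[of _ "{}"])+ auto
  then show ?thesis
    unfolding semialg_def by (intro exI[of _ "{UNIV}"]) auto
qed

lemma semialg_map_id: "semialg_map (\<lambda>z. z)"
  unfolding semialg_map_def
proof (intro exI[of _ "{UNIV}"] conjI ballI)
  show "\<exists>p1 q1 p2 q2. p1 \<in> polyfun \<and> q1 \<in> polyfun \<and> p2 \<in> polyfun \<and> q2 \<in> polyfun \<and>
      (\<forall>z\<in>S. q1 (Re z, Im z) \<noteq> 0 \<and> q2 (Re z, Im z) \<noteq> 0 \<and>
         Re z = p1 (Re z, Im z) / q1 (Re z, Im z) \<and> Im z = p2 (Re z, Im z) / q2 (Re z, Im z))" for S
    using polyfun.pf_fst polyfun.pf_snd polyfun.pf_const[of 1] by fastforce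
qed (auto simp: semialg_UNIV)

lemma sphere_ext_id:
  assumes "x \<in> topspace (nsphere 2)"
  shows "sphere_ext (\<lambda>z. z) x = x"
proof -
  have sph: "x 0 ^ 2 + x 1 ^ 2 + x 2 ^ 2 = 1" and zero: "\<And>i. i > 2 \<Longrightarrow> x i = 0"
    using assms by (auto simp: nsphere numeral_2_eq_2 atMost_Suc)
  have cases_i: "i = 0 \<or> i = 1 \<or> i = 2 \<or> i > 2" for i :: nat
    by linarith
  show ?thesis
  proof (cases "x 2 = 1")
    case True
    then have "x 0 = 0" "x 1 = 0"
      using sph by (auto simp: add_nonneg_eq_0_iff)
    then show ?thesis
      using True zero cases_i by (auto simp: sphere_ext_def north_pole_def fun_eq_iff) metis
  next
    case False
    define d where "d = 1 - x 2"
    have d: "d \<noteq> 0"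
      using False by (simp add: d_def)
    have "(cmod (unstereo x))\<^sup>2 = (x 0 ^ 2 + x 1 ^ 2) / d ^ 2"
      by (simp add: unstereo_def cmod_def d_def power_divide add_divide_distrib)
    also have "x 0 ^ 2 + x 1 ^ 2 = d * (1 + x 2)"
      using sph by (simp add: d_def algebra_simps power2_eq_square)
    finally have norm2: "(cmod (unstereo x))\<^sup>2 = (1 + x 2) / d"
      using d by (simp add: power2_eq_square)
    then have q1: "1 + (cmod (unstereo x))\<^sup>2 = 2 / d" and q2: "(cmod (unstereo x))\<^sup>2 - 1 = 2 * x 2 / d"
      using d by (simp_all add: d_def field_simps)
    have "sphere_ext (\<lambda>z. z) x i = x i" for i
      using cases_i[of i] False d zero
      by (auto simp: sphere_ext_def stereo_def q1 q2 add.commute[of _ 1])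
        (auto simp: unstereo_def d_def field_simps)
    then show ?thesis
      by blast
  qed
qed

lemma Brouwer_degree2_sphere_ext_id: "Brouwer_degree2 2 (sphere_ext (\<lambda>z. z)) = 1"
proof -
  have "Brouwer_degree2 2 (sphere_ext (\<lambda>z. z)) = Brouwer_degree2 2 id"
    by (rule Brouwer_degree2_eq) (simp add: sphere_ext_id)
  then show ?thesis
    by simp
qed

lemma nc_morphism_id:
  assumes "nice_couple X Y"
  shows "nc_morphism X Y X X (\<lambda>z. z)"
  using assms
  by (auto simp: nc_morphism_def semialg_map_id Brouwer_degree2_sphere_ext_id nice_couple_def vimage_def)

section \<open>Fundamental groups of punctured planes\<close>

definition path_in :: "'a::topological_space set \<Rightarrow> (real \<Rightarrow> 'a) \<Rightarrow> bool" where
  "path_in S p \<longleftrightarrow> path p \<and> path_image p \<subseteq> S"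

lemma path_in_join [intro]:
  "path_in S p \<Longrightarrow> path_in S q \<Longrightarrow> pathfinish p = pathstart q \<Longrightarrow> path_in S (p +++ q)"
  by (auto simp: path_in_def path_image_join)

lemma path_in_reversepath [intro]: "path_in S p \<Longrightarrow> path_in S (reversepath p)"
  by (auto simp: path_in_def)

lemma path_in_ends: "path_in S p \<Longrightarrow> pathstart p \<in> S \<and> pathfinish p \<in> S"
  using pathstart_in_path_image[of p] pathfinish_in_path_image[of p] by (auto simp: path_in_def)

lemma homotopic_paths_assoc_left:
  "path_in S p \<Longrightarrow> path_in S q \<Longrightarrow> path_in S r \<Longrightarrow> pathfinish p = pathstart q \<Longrightarrow>
   pathfinish q = pathstart r \<Longrightarrow> homotopic_paths S (p +++ (q +++ r)) ((p +++ q) +++ r)"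
  by (simp add: path_in_def homotopic_paths_assoc)

lemma homotopic_paths_assoc_right:
  "path_in S p \<Longrightarrow> path_in S q \<Longrightarrow> path_in S r \<Longrightarrow> pathfinish p = pathstart q \<Longrightarrow>
   pathfinish q = pathstart r \<Longrightarrow> homotopic_paths S ((p +++ q) +++ r) (p +++ (q +++ r))"
  by (simp add: path_in_def homotopic_paths_assoc homotopic_paths_sym)

lemma homotopic_paths_join_left:
  "homotopic_paths S p p' \<Longrightarrow> path_in S q \<Longrightarrow> pathfinish p = pathstart q \<Longrightarrow>
   homotopic_paths S (p +++ q) (p' +++ q)"
  by (rule homotopic_paths_join) (auto intro: homotopic_paths_refl simp: path_in_def)

lemma homotopic_paths_join_right:
  "path_in S p \<Longrightarrow> homotopic_paths S q q' \<Longrightarrow> pathfinish p = pathstart q \<Longrightarrow>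
   homotopic_paths S (p +++ q) (p +++ q')"
  by (rule homotopic_paths_join) (auto intro: homotopic_paths_refl simp: path_in_def)

lemma homotopic_paths_conj_reassoc:
  assumes "path_in S a" "path_in S b" "path_in S c" "path_in S d" "path_in S e"
    "pathfinish a = pathstart b" "pathfinish b = pathstart c" "pathfinish c = pathstart d"
    "pathfinish d = pathstart e"
  shows "homotopic_paths S ((a +++ (b +++ (c +++ d))) +++ e) ((a +++ b) +++ (c +++ (d +++ e)))"
proof -
  have "homotopic_paths S ((a +++ (b +++ (c +++ d))) +++ e) (a +++ ((b +++ (c +++ d)) +++ e))"
    using assms by (intro homotopic_paths_assoc_right) auto
  also have "homotopic_paths S \<dots> (a +++ (b +++ ((c +++ d) +++ e)))"
    using assms by (intro homotopic_paths_join_right homotopic_paths_assoc_right) auto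
  also have "homotopic_paths S \<dots> (a +++ (b +++ (c +++ (d +++ e))))"
    using assms by (intro homotopic_paths_join_right homotopic_paths_assoc_right) auto
  also have "homotopic_paths S \<dots> ((a +++ b) +++ (c +++ (d +++ e)))"
    using assms by (intro homotopic_paths_assoc_left) auto
  finally show ?thesis .
qed

definition path_class :: "complex set \<Rightarrow> (real \<Rightarrow> complex) \<Rightarrow> cls" where
  "path_class T g = {h. homotopic_paths (- T) g h}"

definition bp_loop :: "complex set \<Rightarrow> (real \<Rightarrow> complex) \<Rightarrow> bool" where
  "bp_loop T g \<longleftrightarrow> path g \<and> path_image g \<subseteq> - T \<and> pathstart g = bp \<and> pathfinish g = bp"

lemma bp_notin_upper_half: "bp \<notin> upper_half"
  by (simp add: bp_def upper_half_def)

lemma carrier_Gpi: "carrier (Gpi T) = {path_class T g | g. bp_loop T g}"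
  by (auto simp: Gpi_def fund_grp_def path_class_def bp_loop_def)

lemma one_Gpi: "\<one>\<^bsub>Gpi T\<^esub> = path_class T (linepath bp bp)"
  by (simp add: Gpi_def fund_grp_def path_class_def)

lemma path_class_in_carrier: "bp_loop T g \<Longrightarrow> path_class T g \<in> carrier (Gpi T)"
  unfolding carrier_Gpi by blast

lemma path_class_eqI: "homotopic_paths (- T) g g' \<Longrightarrow> path_class T g = path_class T g'"
  unfolding path_class_def by (auto intro: homotopic_paths_trans homotopic_paths_sym)

lemma self_mem_path_class: "path g \<Longrightarrow> path_image g \<subseteq> - T \<Longrightarrow> g \<in> path_class T g"
  by (simp add: path_class_def)

lemma mult_Gpi:
  assumes "pathfinish g = pathstart g'" "path g" "path g'" "path_image g \<subseteq> - T" "path_image g' \<subseteq> - T"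
  shows "path_class T g \<otimes>\<^bsub>Gpi T\<^esub> path_class T g' = path_class T (g +++ g')"
proof -
  have "{h. \<exists>a\<in>path_class T g. \<exists>b\<in>path_class T g'. homotopic_paths (- T) (a +++ b) h}
      = path_class T (g +++ g')"
  proof (intro equalityI subsetI)
    fix h
    assume "h \<in> {h. \<exists>a\<in>path_class T g. \<exists>b\<in>path_class T g'. homotopic_paths (- T) (a +++ b) h}"
    then obtain a b where "homotopic_paths (- T) g a" "homotopic_paths (- T) g' b"
      and h: "homotopic_paths (- T) (a +++ b) h"
      by (auto simp: path_class_def)
    then have "homotopic_paths (- T) (g +++ g') (a +++ b)"
      using assms by (intro homotopic_paths_join) auto
    then show "h \<in> path_class T (g +++ g')"
      using h by (auto simp: path_class_def intro: homotopic_paths_trans)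
  next
    fix h
    assume "h \<in> path_class T (g +++ g')"
    then show "h \<in> {h. \<exists>a\<in>path_class T g. \<exists>b\<in>path_class T g'. homotopic_paths (- T) (a +++ b) h}"
      using assms self_mem_path_class[of g T] self_mem_path_class[of g' T]
      unfolding path_class_def mem_Collect_eq by blast
  qed
  then show ?thesis
    by (simp add: Gpi_def fund_grp_def)
qed

lemma group_Gpi:
  assumes "bp \<notin> T"
  shows "group (Gpi T)"
proof (rule groupI)
  fix x y
  assume "x \<in> carrier (Gpi T)" "y \<in> carrier (Gpi T)"
  then obtain g g' where "x = path_class T g" "y = path_class T g'" "bp_loop T g" "bp_loop T g'"
    by (auto simp: carrier_Gpi)
  moreover have "bp_loop T (g +++ g')"
    using \<open>bp_loop T g\<close> \<open>bp_loop T g'\<close> by (auto simp: bp_loop_def path_image_join)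
  ultimately show "x \<otimes>\<^bsub>Gpi T\<^esub> y \<in> carrier (Gpi T)"
    by (auto simp: mult_Gpi bp_loop_def intro: path_class_in_carrier)
next
  show "\<one>\<^bsub>Gpi T\<^esub> \<in> carrier (Gpi T)"
    using assms by (auto simp: carrier_Gpi one_Gpi bp_loop_def)
next
  fix x y z
  assume "x \<in> carrier (Gpi T)" "y \<in> carrier (Gpi T)" "z \<in> carrier (Gpi T)"
  then obtain a b c where "x = path_class T a" "y = path_class T b" "z = path_class T c"
    "bp_loop T a" "bp_loop T b" "bp_loop T c"
    by (auto simp: carrier_Gpi)
  then show "x \<otimes>\<^bsub>Gpi T\<^esub> y \<otimes>\<^bsub>Gpi T\<^esub> z = x \<otimes>\<^bsub>Gpi T\<^esub> (y \<otimes>\<^bsub>Gpi T\<^esub> z)"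
    by (auto simp: mult_Gpi bp_loop_def path_image_join
        intro!: path_class_eqI homotopic_paths_sym[OF homotopic_paths_assoc])
next
  fix x
  assume "x \<in> carrier (Gpi T)"
  then obtain a where "x = path_class T a" "bp_loop T a"
    by (auto simp: carrier_Gpi)
  then show "\<one>\<^bsub>Gpi T\<^esub> \<otimes>\<^bsub>Gpi T\<^esub> x = x"
    using assms
    by (auto simp: one_Gpi bp_loop_def mult_Gpi[of "linepath bp bp" a] intro!: path_class_eqI homotopic_paths_lid')
next
  fix x
  assume "x \<in> carrier (Gpi T)"
  then obtain a where a: "x = path_class T a" "bp_loop T a"
    by (auto simp: carrier_Gpi)
  show "\<exists>y\<in>carrier (Gpi T). y \<otimes>\<^bsub>Gpi T\<^esub> x = \<one>\<^bsub>Gpi T\<^esub>"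
  proof (intro bexI)
    show "path_class T (reversepath a) \<in> carrier (Gpi T)"
      using a by (intro path_class_in_carrier) (auto simp: bp_loop_def)
    show "path_class T (reversepath a) \<otimes>\<^bsub>Gpi T\<^esub> x = \<one>\<^bsub>Gpi T\<^esub>"
      using a homotopic_paths_linv[of a "- T"]
      by (auto simp: one_Gpi mult_Gpi[of "reversepath a" a] bp_loop_def intro!: path_class_eqI)
  qed
qed

lemma inv_Gpi:
  assumes "bp_loop T a" "bp \<notin> T"
  shows "inv\<^bsub>Gpi T\<^esub> (path_class T a) = path_class T (reversepath a)"
proof -
  interpret group "Gpi T"
    using assms(2) by (rule group_Gpi)
  have "path_class T (reversepath a) \<otimes>\<^bsub>Gpi T\<^esub> path_class T a = \<one>\<^bsub>Gpi T\<^esub>"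
    using assms homotopic_paths_linv[of a "- T"]
    by (auto simp: one_Gpi mult_Gpi[of "reversepath a" a] bp_loop_def intro!: path_class_eqI)
  moreover have "path_class T a \<in> carrier (Gpi T)" "path_class T (reversepath a) \<in> carrier (Gpi T)"
    using assms by (auto intro!: path_class_in_carrier simp: bp_loop_def)
  ultimately show ?thesis
    by (simp add: inv_equality)
qed

lemma small_loop_bp_loop:
  assumes "r > 0" "cball z r \<inter> P = {z}" "path \<alpha>" "path_image \<alpha> \<subseteq> - P" "pathstart \<alpha> = bp"
    "pathfinish \<alpha> = pathstart (reversepath (circlepath z r))"
  shows "bp_loop P (\<alpha> +++ reversepath (circlepath z r) +++ reversepath \<alpha>)"
proof -
  have "sphere z r \<inter> P = {}"
    using assms(1,2) by force
  then show ?thesis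
    using assms by (auto simp: bp_loop_def path_image_join)
qed

lemma small_loops_carrier: "small_loops P z \<subseteq> carrier (Gpi P)"
  unfolding small_loops_def carrier_Gpi path_class_def[symmetric] using small_loop_bp_loop by blast

lemma Qset_carrier: "bp \<notin> P \<Longrightarrow> Qset Y P \<subseteq> carrier (Gpi P)"
  unfolding Qset_def using small_loops_carrier group.is_monoid[OF group_Gpi] monoid.one_closed by blast

lemma Qset_superset: "P \<subseteq> X \<Longrightarrow> Qset X P = {\<one>\<^bsub>Gpi P\<^esub>}"
  unfolding Qset_def by auto

lemma small_loops_conj:
  assumes "bp \<notin> P" "s \<in> small_loops P z" "h \<in> carrier (Gpi P)"
  shows "inv\<^bsub>Gpi P\<^esub> h \<otimes>\<^bsub>Gpi P\<^esub> s \<otimes>\<^bsub>Gpi P\<^esub> h \<in> small_loops P z"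
proof -
  obtain \<alpha> r where s: "s = path_class P (\<alpha> +++ reversepath (circlepath z r) +++ reversepath \<alpha>)"
    and r: "r > 0" "cball z r \<inter> P = {z}"
    and \<alpha>: "path \<alpha>" "path_image \<alpha> \<subseteq> - P" "pathstart \<alpha> = bp"
      "pathfinish \<alpha> = pathstart (reversepath (circlepath z r))"
    using assms(2) unfolding small_loops_def path_class_def by blast
  obtain k where h: "h = path_class P k" "bp_loop P k"
    using assms(3) by (auto simp: carrier_Gpi)
  define c where "c = reversepath (circlepath z r)"
  have "sphere z r \<inter> P = {}"
    using r by force
  then have c: "path_in (- P) c"
    using r by (auto simp: path_in_def c_def)
  have s_loop: "bp_loop P (\<alpha> +++ c +++ reversepath \<alpha>)"
    unfolding c_def using r \<alpha> by (rule small_loop_bp_loop)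
  have "inv\<^bsub>Gpi P\<^esub> h \<otimes>\<^bsub>Gpi P\<^esub> s \<otimes>\<^bsub>Gpi P\<^esub> h
      = path_class P ((reversepath k +++ (\<alpha> +++ c +++ reversepath \<alpha>)) +++ k)"
    using h s_loop assms(1) \<alpha> unfolding s c_def[symmetric]
    by (simp add: inv_Gpi mult_Gpi bp_loop_def path_image_join)
  also have "\<dots> = path_class P ((reversepath k +++ \<alpha>) +++ c +++ reversepath (reversepath k +++ \<alpha>))"
    using homotopic_paths_conj_reassoc[of "- P" "reversepath k" \<alpha> c "reversepath \<alpha>" k] c \<alpha> h
    by (intro path_class_eqI) (auto simp: reversepath_joinpaths bp_loop_def c_def path_in_def)
  finally show ?thesis
    unfolding small_loops_def path_class_def[symmetric] c_def
    using r \<alpha> h by (intro CollectI exI[of _ "reversepath k +++ \<alpha>"] exI[of _ r])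
      (auto simp: bp_loop_def path_image_join)
qed

lemma Qset_conj:
  assumes "bp \<notin> P" "x \<in> Qset Y P" "h \<in> carrier (Gpi P)"
  shows "inv\<^bsub>Gpi P\<^esub> h \<otimes>\<^bsub>Gpi P\<^esub> x \<otimes>\<^bsub>Gpi P\<^esub> h \<in> Qset Y P"
proof -
  interpret group "Gpi P"
    using assms(1) by (rule group_Gpi)
  show ?thesis
    using assms small_loops_conj[of P x _ h] unfolding Qset_def by auto
qed

definition Qprods :: "complex set \<Rightarrow> complex set \<Rightarrow> cls set" where
  "Qprods Y P = {foldr (\<lambda>a b. a \<otimes>\<^bsub>Gpi P\<^esub> b) gs \<one>\<^bsub>Gpi P\<^esub> | gs. set gs \<subseteq> Qset Y P}"

lemma foldr_mult_Gpi_closed: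
  assumes "bp \<notin> P" "set gs \<subseteq> carrier (Gpi P)"
  shows "foldr (\<lambda>a b. a \<otimes>\<^bsub>Gpi P\<^esub> b) gs \<one>\<^bsub>Gpi P\<^esub> \<in> carrier (Gpi P)"
proof -
  interpret group "Gpi P"
    using assms(1) by (rule group_Gpi)
  show ?thesis
    using assms(2) by (induction gs) auto
qed

lemma hom_foldr_mult_Gpi:
  assumes "bp \<notin> P" "group G" "\<phi> \<in> hom (Gpi P) G" "set gs \<subseteq> carrier (Gpi P)"
  shows "\<phi> (foldr (\<lambda>a b. a \<otimes>\<^bsub>Gpi P\<^esub> b) gs \<one>\<^bsub>Gpi P\<^esub>) = foldr (\<lambda>a b. \<phi> a \<otimes>\<^bsub>G\<^esub> b) gs \<one>\<^bsub>G\<^esub>"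
  using assms(4)
proof (induction gs)
  case Nil
  then show ?case
    using hom_one[OF assms(3) group_Gpi[OF assms(1)] assms(2)] by simp
next
  case (Cons a gs)
  then show ?case
    using foldr_mult_Gpi_closed[OF assms(1), of gs] assms(3) by (simp add: hom_mult)
qed

lemma Qprods_carrier: "bp \<notin> P \<Longrightarrow> Qprods Y P \<subseteq> carrier (Gpi P)"
  unfolding Qprods_def using foldr_mult_Gpi_closed Qset_carrier by blast

lemma one_in_Qprods: "\<one>\<^bsub>Gpi P\<^esub> \<in> Qprods Y P"
  unfolding Qprods_def by (auto intro!: exI[of _ "[]"])

lemma Qset_subset_Qprods:
  assumes "bp \<notin> P"
  shows "Qset Y P \<subseteq> Qprods Y P"
proof
  fix x
  assume x: "x \<in> Qset Y P"
  then have "x \<in> carrier (Gpi P)"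
    using Qset_carrier[OF assms] by blast
  then have "foldr (\<lambda>a b. a \<otimes>\<^bsub>Gpi P\<^esub> b) [x] \<one>\<^bsub>Gpi P\<^esub> = x"
    using monoid.r_one[OF group.is_monoid[OF group_Gpi[OF assms]]] by simp
  then show "x \<in> Qprods Y P"
    unfolding Qprods_def using x by (intro CollectI exI[of _ "[x]"]) simp
qed

lemma mult_in_Qprods:
  assumes "bp \<notin> P" "x \<in> Qprods Y P" "y \<in> Qprods Y P"
  shows "x \<otimes>\<^bsub>Gpi P\<^esub> y \<in> Qprods Y P"
proof -
  interpret group "Gpi P"
    using assms(1) by (rule group_Gpi)
  obtain gs hs where gs: "set gs \<subseteq> Qset Y P" "x = foldr (\<lambda>a b. a \<otimes>\<^bsub>Gpi P\<^esub> b) gs \<one>\<^bsub>Gpi P\<^esub>"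
    and hs: "set hs \<subseteq> Qset Y P" "y = foldr (\<lambda>a b. a \<otimes>\<^bsub>Gpi P\<^esub> b) hs \<one>\<^bsub>Gpi P\<^esub>"
    using assms by (auto simp: Qprods_def)
  have y: "y \<in> carrier (Gpi P)"
    using assms Qprods_carrier by blast
  have "foldr (\<lambda>a b. a \<otimes>\<^bsub>Gpi P\<^esub> b) gs y = x \<otimes>\<^bsub>Gpi P\<^esub> y"
    using gs(1) unfolding gs(2)
  proof (induction gs)
    case (Cons a gs)
    have "a \<in> carrier (Gpi P)"
      using Cons.prems Qset_carrier[OF assms(1)] by auto
    moreover have "foldr (\<lambda>a b. a \<otimes>\<^bsub>Gpi P\<^esub> b) gs \<one>\<^bsub>Gpi P\<^esub> \<in> carrier (Gpi P)"
      using Cons.prems Qset_carrier[OF assms(1), of Y] foldr_mult_Gpi_closed[OF assms(1), of gs] by auto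
    ultimately show ?case
      using Cons y by (simp add: m_assoc)
  qed (simp add: y)
  then show ?thesis
    unfolding Qprods_def using gs hs by (intro CollectI exI[of _ "gs @ hs"]) auto
qed

lemma foldr_mult_in_Qprods:
  "bp \<notin> P \<Longrightarrow> set hs \<subseteq> Qprods Y P \<Longrightarrow> foldr (\<lambda>a b. a \<otimes>\<^bsub>Gpi P\<^esub> b) hs \<one>\<^bsub>Gpi P\<^esub> \<in> Qprods Y P"
  by (induction hs) (auto simp: one_in_Qprods mult_in_Qprods)

text \<open>Away from products of small loops, \<open>psi_ext\<close> is the junk value of an unsatisfiable Hilbert choice,
  the same for every \<open>P\<close> and \<open>\<psi>\<close>.\<close>

lemma psi_ext_eq:
  assumes "bp \<notin> P" "group G" "\<phi> \<in> hom (Gpi P) G" "\<forall>x\<in>Qset Y P. \<psi> x = \<phi> x"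
  shows "psi_ext G Y P \<psi> y = (if y \<in> Qprods Y P then \<phi> y else (SOME x. False))"
proof (cases "y \<in> Qprods Y P")
  case True
  have unique: "x = \<phi> y" if gs: "set gs \<subseteq> Qset Y P" "y = foldr (\<lambda>a b. a \<otimes>\<^bsub>Gpi P\<^esub> b) gs \<one>\<^bsub>Gpi P\<^esub>"
     and x: "x = foldr (\<lambda>a b. \<psi> a \<otimes>\<^bsub>G\<^esub> b) gs \<one>\<^bsub>G\<^esub>" for x gs
  proof -
    have "x = foldr (\<lambda>a b. \<phi> a \<otimes>\<^bsub>G\<^esub> b) gs \<one>\<^bsub>G\<^esub>"
      unfolding x using gs(1) assms(4) by (induction gs) auto
    also have "\<dots> = \<phi> y"
      unfolding gs(2) using gs(1) Qset_carrier[OF assms(1)]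
      by (intro hom_foldr_mult_Gpi[symmetric] assms(1-3)) blast
    finally show ?thesis .
  qed
  from True obtain gs where gs: "set gs \<subseteq> Qset Y P" "y = foldr (\<lambda>a b. a \<otimes>\<^bsub>Gpi P\<^esub> b) gs \<one>\<^bsub>Gpi P\<^esub>"
    by (auto simp: Qprods_def)
  have "psi_ext G Y P \<psi> y = \<phi> y"
    unfolding psi_ext_def
  proof (rule someI2)
    show "\<exists>gs'. set gs' \<subseteq> Qset Y P \<and> y = foldr (\<lambda>a b. a \<otimes>\<^bsub>Gpi P\<^esub> b) gs' \<one>\<^bsub>Gpi P\<^esub> \<and>
        foldr (\<lambda>a b. \<psi> a \<otimes>\<^bsub>G\<^esub> b) gs \<one>\<^bsub>G\<^esub> = foldr (\<lambda>a b. \<psi> a \<otimes>\<^bsub>G\<^esub> b) gs' \<one>\<^bsub>G\<^esub>"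
      using gs by blast
  next
    fix x
    assume "\<exists>gs. set gs \<subseteq> Qset Y P \<and> y = foldr (\<lambda>a b. a \<otimes>\<^bsub>Gpi P\<^esub> b) gs \<one>\<^bsub>Gpi P\<^esub> \<and>
        x = foldr (\<lambda>a b. \<psi> a \<otimes>\<^bsub>G\<^esub> b) gs \<one>\<^bsub>G\<^esub>"
    then show "x = \<phi> y"
      using unique by blast
  qed
  then show ?thesis
    using True by simp
next
  case False
  then have "(\<lambda>x. \<exists>gs. set gs \<subseteq> Qset Y P \<and> y = foldr (\<lambda>a b. a \<otimes>\<^bsub>Gpi P\<^esub> b) gs \<one>\<^bsub>Gpi P\<^esub> \<and>
       x = foldr (\<lambda>a b. \<psi> a \<otimes>\<^bsub>G\<^esub> b) gs \<one>\<^bsub>G\<^esub>) = (\<lambda>x. False)"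
    by (auto simp: Qprods_def)
  then show ?thesis
    using False by (simp add: psi_ext_def)
qed

definition restrict_psi :: "complex set \<Rightarrow> 'g config \<Rightarrow> 'g config" where
  "restrict_psi Z = (\<lambda>(P, \<psi>, \<phi>). (P, restrict \<psi> (Qset Z P), \<phi>))"

definition psi_of_phi :: "complex set \<Rightarrow> 'g config \<Rightarrow> 'g config" where
  "psi_of_phi Y = (\<lambda>(P, \<psi>, \<phi>). (P, restrict \<phi> (Qset Y P), \<phi>))"

lemma Hur_memD:
  assumes "(P, \<psi>, \<phi>) \<in> Hur X Y G"
  shows "finite P" "P \<subseteq> X" "\<phi> \<in> hom (Gpi P) G" "\<phi> \<in> extensional (carrier (Gpi P))"
      "\<psi> \<in> Qset Y P \<rightarrow> carrier G" "\<psi> \<in> extensional (Qset Y P)" "\<psi> \<one>\<^bsub>Gpi P\<^esub> = \<one>\<^bsub>G\<^esub>"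
      "\<forall>x \<in> Qset Y P. \<psi> x = \<phi> x"
      "\<forall>x \<in> Qset Y P. \<forall>h \<in> carrier (Gpi P).
          \<psi> (inv\<^bsub>Gpi P\<^esub> h \<otimes>\<^bsub>Gpi P\<^esub> x \<otimes>\<^bsub>Gpi P\<^esub> h) = inv\<^bsub>G\<^esub> (\<phi> h) \<otimes>\<^bsub>G\<^esub> \<psi> x \<otimes>\<^bsub>G\<^esub> \<phi> h"
  using assms by (auto simp: Hur_def)

lemma Hur_bp_notin:
  "X \<subseteq> upper_half \<Longrightarrow> (P, \<psi>, \<phi>) \<in> Hur X Y G \<Longrightarrow> bp \<notin> P"
  using Hur_memD(2) bp_notin_upper_half by blast

lemma Hur_psi_eq_restrict_phi:
  assumes "(P, \<psi>, \<phi>) \<in> Hur X Y G"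
  shows "\<psi> = restrict \<phi> (Qset Y P)"
  using Hur_memD(6,8)[OF assms] by (auto simp: fun_eq_iff extensional_def restrict_def)

lemma restrict_psi_in_Hur:
  assumes "X \<subseteq> upper_half" "group G" "c \<in> Hur X Y G"
  shows "restrict_psi X c \<in> Hur X X G"
proof -
  obtain P \<psi> \<phi> where c: "c = (P, \<psi>, \<phi>)"
    by (cases c)
  note h = Hur_memD[OF assms(3)[unfolded c]]
  interpret G: group G
    by fact
  interpret \<pi>: group "Gpi P"
    using Hur_bp_notin[OF assms(1) assms(3)[unfolded c]] by (rule group_Gpi)
  have "\<phi> h \<in> carrier G" if "h \<in> carrier (Gpi P)" for h
    using h(3) that by (auto simp: hom_def)
  moreover have "\<one>\<^bsub>Gpi P\<^esub> \<in> Qset Y P"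
    by (simp add: Qset_def)
  ultimately show ?thesis
    unfolding c restrict_psi_def using h by (auto simp: Hur_def Qset_superset)
qed

lemma psi_of_phi_in_Hur:
  assumes "X \<subseteq> upper_half" "group G" "c \<in> Hur X X G"
  shows "psi_of_phi Y c \<in> Hur X Y G"
proof -
  obtain P \<psi> \<phi> where c: "c = (P, \<psi>, \<phi>)"
    by (cases c)
  note h = Hur_memD[OF assms(3)[unfolded c]]
  have bp: "bp \<notin> P"
    using Hur_bp_notin[OF assms(1) assms(3)[unfolded c]] .
  interpret G: group G
    by fact
  interpret \<pi>: group "Gpi P"
    using bp by (rule group_Gpi)
  have hom: "group_hom (Gpi P) G \<phi>"
    using h(3) by unfold_locales
  have Q: "Qset Y P \<subseteq> carrier (Gpi P)"
    using Qset_carrier[OF bp] .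
  have conj: "restrict \<phi> (Qset Y P) (inv\<^bsub>Gpi P\<^esub> k \<otimes>\<^bsub>Gpi P\<^esub> x \<otimes>\<^bsub>Gpi P\<^esub> k)
      = inv\<^bsub>G\<^esub> \<phi> k \<otimes>\<^bsub>G\<^esub> restrict \<phi> (Qset Y P) x \<otimes>\<^bsub>G\<^esub> \<phi> k"
    if "x \<in> Qset Y P" "k \<in> carrier (Gpi P)" for x k
    using that Q Qset_conj[OF bp that]
    by (auto simp: group_hom.hom_mult[OF hom] group_hom.hom_inv[OF hom])
  have "(P, restrict \<phi> (Qset Y P), \<phi>) \<in> Hur X Y G"
    unfolding Hur_def
  proof (intro CollectI case_prodI conjI)
    show "restrict \<phi> (Qset Y P) \<in> Qset Y P \<rightarrow> carrier G"
      using Q h(3) by (auto simp: hom_def)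
    show "restrict \<phi> (Qset Y P) \<one>\<^bsub>Gpi P\<^esub> = \<one>\<^bsub>G\<^esub>"
      by (simp add: Qset_def group_hom.hom_one[OF hom])
  qed (use h conj in auto)
  then show ?thesis
    by (simp add: c psi_of_phi_def)
qed

lemma psi_of_phi_restrict_psi: "c \<in> Hur X Y G \<Longrightarrow> psi_of_phi Y (restrict_psi X c) = c"
  by (cases c) (simp add: restrict_psi_def psi_of_phi_def Hur_psi_eq_restrict_phi[symmetric])

lemma restrict_psi_psi_of_phi:
  assumes "c \<in> Hur X X G"
  shows "restrict_psi X (psi_of_phi Y c) = c"
proof -
  obtain P \<psi> \<phi> where c: "c = (P, \<psi>, \<phi>)"
    by (cases c)
  have "restrict (restrict \<phi> (Qset Y P)) (Qset X P) = \<psi>"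
    using Hur_psi_eq_restrict_phi[OF assms[unfolded c]] Hur_memD(2)[OF assms[unfolded c]]
    by (auto simp: fun_eq_iff Qset_superset Qset_def)
  then show ?thesis
    by (simp add: c restrict_psi_def psi_of_phi_def)
qed

section \<open>Loops around rectangles\<close>

lemma homotopic_paths_cancel_middle:
  fixes S :: "'a::real_normed_vector set"
  assumes "path_in S a" "path_in S k" "path_in S b" "pathfinish a = pathfinish k" "pathfinish k = pathstart b"
  shows "homotopic_paths S ((a +++ reversepath k) +++ (k +++ b)) (a +++ b)"
proof -
  have "homotopic_paths S ((a +++ reversepath k) +++ (k +++ b)) (a +++ (reversepath k +++ (k +++ b)))"
    using assms by (intro homotopic_paths_assoc_right) auto
  also have "homotopic_paths S \<dots> (a +++ ((reversepath k +++ k) +++ b))"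
    using assms by (intro homotopic_paths_join_right homotopic_paths_assoc_left) auto
  also have "homotopic_paths S \<dots> (a +++ (linepath (pathfinish k) (pathfinish k) +++ b))"
    using assms homotopic_paths_linv[of k S]
    by (intro homotopic_paths_join_right homotopic_paths_join_left) (auto simp: path_in_def)
  also have "homotopic_paths S \<dots> (a +++ b)"
    using assms by (intro homotopic_paths_join_right homotopic_paths_lid') (auto simp: path_in_def)
  finally show ?thesis .
qed

definition bp_path :: "complex set \<Rightarrow> complex \<Rightarrow> (real \<Rightarrow> complex)" where
  "bp_path T x = (if x = bp then linepath bp bp
      else (SOME k. path k \<and> path_image k \<subseteq> - T \<and> pathstart k = bp \<and> pathfinish k = x))"

definition based_class :: "complex set \<Rightarrow> (real \<Rightarrow> complex) \<Rightarrow> cls" where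
  "based_class T p = path_class T (bp_path T (pathstart p) +++ p +++ reversepath (bp_path T (pathfinish p)))"

locale punctured_plane =
  fixes T :: "complex set"
  assumes finite_T: "finite T" and bp_notin_T: "bp \<notin> T"
begin

lemma group_Gpi_T: "group (Gpi T)"
  using bp_notin_T by (rule group_Gpi)

lemma bp_path:
  assumes "x \<notin> T"
  shows "path_in (- T) (bp_path T x)" "pathstart (bp_path T x) = bp" "pathfinish (bp_path T x) = x"
proof -
  have "path_connected (- T)"
    using finite_T by (intro path_connected_complement_countable) (auto simp: countable_finite)
  then have ex: "\<exists>k. path k \<and> path_image k \<subseteq> - T \<and> pathstart k = bp \<and> pathfinish k = x"
    using assms bp_notin_T unfolding path_connected_def by blast
  have "path (bp_path T x) \<and> path_image (bp_path T x) \<subseteq> - T \<and> pathstart (bp_path T x) = bp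
      \<and> pathfinish (bp_path T x) = x"
  proof (cases "x = bp")
    case True
    then show ?thesis
      using bp_notin_T by (simp add: bp_path_def)
  next
    case False
    then show ?thesis
      using someI_ex[OF ex] by (simp add: bp_path_def)
  qed
  then show "path_in (- T) (bp_path T x)" "pathstart (bp_path T x) = bp" "pathfinish (bp_path T x) = x"
    by (auto simp: path_in_def)
qed

lemma based_class_carrier:
  assumes "path_in (- T) p"
  shows "based_class T p \<in> carrier (Gpi T)"
proof -
  have "pathstart p \<notin> T" "pathfinish p \<notin> T"
    using path_in_ends[OF assms] by auto
  then have "bp_loop T (bp_path T (pathstart p) +++ p +++ reversepath (bp_path T (pathfinish p)))"
    using assms bp_path[of "pathstart p"] bp_path[of "pathfinish p"]
    by (auto simp: bp_loop_def path_in_def path_image_join)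
  then show ?thesis
    unfolding based_class_def by (rule path_class_in_carrier)
qed

lemma based_class_cong:
  assumes h: "homotopic_paths (- T) p q"
  shows "based_class T p = based_class T q"
proof -
  have "path_in (- T) p"
    using h by (simp add: path_in_def homotopic_paths_imp_path homotopic_paths_imp_subset)
  then have "pathstart p \<notin> T" "pathfinish p \<notin> T"
    using path_in_ends by auto
  moreover have ends: "pathstart q = pathstart p" "pathfinish q = pathfinish p"
    using homotopic_paths_imp_pathstart[OF h] homotopic_paths_imp_pathfinish[OF h] by simp_all
  ultimately show ?thesis
    unfolding based_class_def ends using h bp_path
    by (intro path_class_eqI homotopic_paths_join_right homotopic_paths_join_left) auto
qed

lemma based_class_bp_loop:
  assumes "bp_loop T p"
  shows "based_class T p = path_class T p"
proof -
  have p: "path_in (- T) p" "pathstart p = bp" "pathfinish p = bp"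
    using assms by (auto simp: bp_loop_def path_in_def)
  have "homotopic_paths (- T) (linepath bp bp +++ (p +++ linepath bp bp)) (linepath bp bp +++ p)"
    using p bp_notin_T by (intro homotopic_paths_join_right homotopic_paths_rid') (auto simp: path_in_def)
  also have "homotopic_paths (- T) \<dots> p"
    using p by (intro homotopic_paths_lid') (auto simp: path_in_def)
  finally show ?thesis
    unfolding based_class_def p(2,3) by (simp add: bp_path_def path_class_eqI)
qed

lemma based_class_join:
  assumes p: "path_in (- T) p" and q: "path_in (- T) q" and pq: "pathfinish p = pathstart q"
  shows "based_class T (p +++ q) = based_class T p \<otimes>\<^bsub>Gpi T\<^esub> based_class T q"
proof -
  define ka kb kc where "ka = bp_path T (pathstart p)" and "kb = bp_path T (pathfinish p)"
    and "kc = bp_path T (pathfinish q)"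
  have k: "path_in (- T) ka" "path_in (- T) kb" "path_in (- T) kc"
     "pathstart ka = bp" "pathstart kb = bp" "pathstart kc = bp"
     "pathfinish ka = pathstart p" "pathfinish kb = pathfinish p" "pathfinish kc = pathfinish q"
    using path_in_ends[OF p] path_in_ends[OF q] bp_path unfolding ka_def kb_def kc_def by auto
  have "path_in (- T) (ka +++ (p +++ reversepath kb))"
    using k p by (intro path_in_join path_in_reversepath) auto
  moreover have "path_in (- T) (kb +++ (q +++ reversepath kc))"
    using k q pq by (intro path_in_join path_in_reversepath) auto
  ultimately have loops: "path_in (- T) (ka +++ (p +++ reversepath kb))" "path_in (- T) (kb +++ (q +++ reversepath kc))"
    by blast+
  then have "based_class T p \<otimes>\<^bsub>Gpi T\<^esub> based_class T q
      = path_class T ((ka +++ (p +++ reversepath kb)) +++ (kb +++ (q +++ reversepath kc)))"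
    unfolding based_class_def ka_def[symmetric] kb_def[symmetric] kc_def[symmetric] pq[symmetric]
    using k by (intro mult_Gpi) (auto simp: path_in_def)
  also have "\<dots> = path_class T (((ka +++ p) +++ reversepath kb) +++ (kb +++ (q +++ reversepath kc)))"
    using k p q pq loops by (intro path_class_eqI homotopic_paths_join_left homotopic_paths_assoc_left) auto
  also have "\<dots> = path_class T ((ka +++ p) +++ (q +++ reversepath kc))"
    using k p q pq by (intro path_class_eqI homotopic_paths_cancel_middle) auto
  also have "\<dots> = path_class T (ka +++ (p +++ (q +++ reversepath kc)))"
    using k p q pq by (intro path_class_eqI homotopic_paths_assoc_right) auto
  also have "\<dots> = path_class T (ka +++ ((p +++ q) +++ reversepath kc))"
    using k p q pq by (intro path_class_eqI homotopic_paths_join_right homotopic_paths_assoc_left) auto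
  also have "\<dots> = based_class T (p +++ q)"
    unfolding based_class_def ka_def kc_def using pq by simp
  finally show ?thesis
    by (rule sym)
qed

lemma based_class_const:
  assumes "a \<notin> T"
  shows "based_class T (linepath a a) = \<one>\<^bsub>Gpi T\<^esub>"
proof -
  interpret group "Gpi T"
    by (rule group_Gpi_T)
  have l: "path_in (- T) (linepath a a)"
    using assms by (simp add: path_in_def)
  have "based_class T (linepath a a) \<otimes>\<^bsub>Gpi T\<^esub> based_class T (linepath a a)
      = based_class T (linepath a a +++ linepath a a)"
    using based_class_join[OF l l] by simp
  also have "\<dots> = based_class T (linepath a a)"
    using homotopic_paths_rid'[of "linepath a a" "- T" a] assms by (intro based_class_cong) simp
  finally show ?thesis
    using based_class_carrier[OF l] by simp
qed

lemma based_class_reversepath: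
  assumes p: "path_in (- T) p"
  shows "based_class T (reversepath p) = inv\<^bsub>Gpi T\<^esub> based_class T p"
proof -
  interpret group "Gpi T"
    by (rule group_Gpi_T)
  have "based_class T p \<otimes>\<^bsub>Gpi T\<^esub> based_class T (reversepath p) = based_class T (p +++ reversepath p)"
    using based_class_join[OF p path_in_reversepath[OF p]] by simp
  also have "\<dots> = based_class T (linepath (pathstart p) (pathstart p))"
    using homotopic_paths_rinv[of p "- T"] p by (intro based_class_cong) (simp add: path_in_def)
  also have "\<dots> = \<one>\<^bsub>Gpi T\<^esub>"
    using path_in_ends[OF p] based_class_const by simp
  finally have "based_class T (reversepath p) \<otimes>\<^bsub>Gpi T\<^esub> based_class T p = \<one>\<^bsub>Gpi T\<^esub>"
    using based_class_carrier[OF p] based_class_carrier[OF path_in_reversepath[OF p]] inv_comm by blast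
  then show ?thesis
    using based_class_carrier[OF p] based_class_carrier[OF path_in_reversepath[OF p]]
    by (simp add: inv_equality)
qed

lemma path_class_conj:
  assumes \<beta>: "path_in (- T) \<beta>" "pathstart \<beta> = bp"
    and l: "path_in (- T) l" "pathstart l = pathfinish \<beta>" "pathfinish l = pathfinish \<beta>"
  shows "path_class T (\<beta> +++ l +++ reversepath \<beta>)
       = based_class T \<beta> \<otimes>\<^bsub>Gpi T\<^esub> based_class T l \<otimes>\<^bsub>Gpi T\<^esub> inv\<^bsub>Gpi T\<^esub> based_class T \<beta>"
proof -
  interpret group "Gpi T"
    by (rule group_Gpi_T)
  have "bp_loop T (\<beta> +++ l +++ reversepath \<beta>)"
    using \<beta> l by (auto simp: bp_loop_def path_in_def path_image_join)
  then have "path_class T (\<beta> +++ l +++ reversepath \<beta>) = based_class T (\<beta> +++ l +++ reversepath \<beta>)"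
    by (rule based_class_bp_loop[symmetric])
  also have "\<dots> = based_class T \<beta> \<otimes>\<^bsub>Gpi T\<^esub> (based_class T l \<otimes>\<^bsub>Gpi T\<^esub> based_class T (reversepath \<beta>))"
  proof -
    have r: "path_in (- T) (reversepath \<beta>)" and j: "path_in (- T) (l +++ reversepath \<beta>)"
      using \<beta> l by auto
    show ?thesis
      using based_class_join[OF \<beta>(1) j] based_class_join[OF l(1) r] \<beta> l by simp
  qed
  also have "\<dots> = based_class T \<beta> \<otimes>\<^bsub>Gpi T\<^esub> based_class T l \<otimes>\<^bsub>Gpi T\<^esub> inv\<^bsub>Gpi T\<^esub> based_class T \<beta>"
    using \<beta> l by (simp add: based_class_reversepath based_class_carrier m_assoc)
  finally show ?thesis .
qed

abbreviation seg_class :: "complex \<Rightarrow> complex \<Rightarrow> cls" where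
  "seg_class a b \<equiv> based_class T (linepath a b)"

lemma path_in_linepath: "closed_segment a b \<subseteq> - T \<Longrightarrow> path_in (- T) (linepath a b)"
  by (simp add: path_in_def)

lemma seg_class_carrier: "closed_segment a b \<subseteq> - T \<Longrightarrow> seg_class a b \<in> carrier (Gpi T)"
  using based_class_carrier path_in_linepath by blast

lemma seg_class_reverse: "closed_segment a b \<subseteq> - T \<Longrightarrow> seg_class b a = inv\<^bsub>Gpi T\<^esub> seg_class a b"
  using based_class_reversepath[OF path_in_linepath, of a b] by simp

lemma seg_class_split:
  assumes ac: "closed_segment a c \<subseteq> - T" and b: "b \<in> closed_segment a c"
  shows "seg_class a c = seg_class a b \<otimes>\<^bsub>Gpi T\<^esub> seg_class b c"
proof -
  have sub: "closed_segment a b \<subseteq> closed_segment a c" "closed_segment b c \<subseteq> closed_segment a c"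
    using b by (auto simp: subset_closed_segment)
  have "homotopic_paths (- T) (linepath a c) (linepath a b +++ linepath b c)"
  proof (rule homotopic_paths_linear)
    fix t :: real
    assume t: "t \<in> {0..1}"
    have "linepath a c t \<in> closed_segment a c"
      using t by (metis linepath_image_01 imageI)
    moreover have "(linepath a b +++ linepath b c) t \<in> path_image (linepath a b +++ linepath b c)"
      using t by (simp add: path_image_def)
    then have "(linepath a b +++ linepath b c) t \<in> closed_segment a c"
      using sub by (auto simp: path_image_join)
    ultimately show "closed_segment (linepath a c t) ((linepath a b +++ linepath b c) t) \<subseteq> - T"
      using ac subset_closed_segment by blast
  qed auto
  then have "seg_class a c = based_class T (linepath a b +++ linepath b c)"
    by (rule based_class_cong)
  also have "\<dots> = seg_class a b \<otimes>\<^bsub>Gpi T\<^esub> seg_class b c"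
    using sub ac by (intro based_class_join path_in_linepath) auto
  finally show ?thesis .
qed

lemma based_class_rectpath:
  assumes "path_image (rectpath a1 a3) \<subseteq> - T"
  defines "a2 \<equiv> Complex (Re a3) (Im a1)" and "a4 \<equiv> Complex (Re a1) (Im a3)"
  shows "based_class T (rectpath a1 a3)
      = seg_class a1 a2 \<otimes>\<^bsub>Gpi T\<^esub> (seg_class a2 a3 \<otimes>\<^bsub>Gpi T\<^esub> (seg_class a3 a4 \<otimes>\<^bsub>Gpi T\<^esub> seg_class a4 a1))"
    and "closed_segment a1 a2 \<subseteq> - T" "closed_segment a2 a3 \<subseteq> - T" "closed_segment a3 a4 \<subseteq> - T"
      "closed_segment a4 a1 \<subseteq> - T"
proof -
  have r: "rectpath a1 a3 = linepath a1 a2 +++ linepath a2 a3 +++ linepath a3 a4 +++ linepath a4 a1"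
    by (simp add: rectpath_def a2_def a4_def Let_def)
  show s: "closed_segment a1 a2 \<subseteq> - T" "closed_segment a2 a3 \<subseteq> - T" "closed_segment a3 a4 \<subseteq> - T"
    "closed_segment a4 a1 \<subseteq> - T"
    using assms(1) unfolding r by (auto simp: path_image_join)
  show "based_class T (rectpath a1 a3)
      = seg_class a1 a2 \<otimes>\<^bsub>Gpi T\<^esub> (seg_class a2 a3 \<otimes>\<^bsub>Gpi T\<^esub> (seg_class a3 a4 \<otimes>\<^bsub>Gpi T\<^esub> seg_class a4 a1))"
    unfolding r using s by (simp add: based_class_join path_in_linepath path_in_join)
qed

end

text \<open>The class of the loop that runs along \<open>\<beta>\<close> to the corner \<open>a1\<close>, clockwise around the rectangle
  \<open>cbox a1 a3\<close>, and back along \<open>\<beta>\<close>.\<close>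

definition rect_conj :: "complex set \<Rightarrow> (real \<Rightarrow> complex) \<Rightarrow> complex \<Rightarrow> complex \<Rightarrow> cls" where
  "rect_conj T \<beta> a1 a3 = based_class T \<beta> \<otimes>\<^bsub>Gpi T\<^esub> inv\<^bsub>Gpi T\<^esub> (based_class T (rectpath a1 a3))
      \<otimes>\<^bsub>Gpi T\<^esub> inv\<^bsub>Gpi T\<^esub> (based_class T \<beta>)"

lemma (in group) mult_inv_mult_cancel: "x \<in> carrier G \<Longrightarrow> y \<in> carrier G \<Longrightarrow> x \<otimes> (inv x \<otimes> y) = y"
  by (simp flip: m_assoc)

lemma (in group) inv_mult_mult_cancel: "x \<in> carrier G \<Longrightarrow> y \<in> carrier G \<Longrightarrow> inv x \<otimes> (x \<otimes> y) = y"
  by (simp flip: m_assoc)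

context punctured_plane
begin

lemma rect_conj_split_vertical:
  assumes t: "Re a1 < t" "t < Re a3" and im: "Im a1 < Im a3"
    and R: "path_image (rectpath a1 a3) \<subseteq> - T" and tT: "\<forall>z\<in>T. Re z \<noteq> t"
    and \<beta>: "path_in (- T) \<beta>" "pathfinish \<beta> = a1"
  defines "m0 \<equiv> Complex t (Im a1)" and "m1 \<equiv> Complex t (Im a3)"
  shows "path_image (rectpath a1 m1) \<subseteq> - T" "path_image (rectpath m0 a3) \<subseteq> - T"
    "path_in (- T) (\<beta> +++ linepath a1 m0)"
    "rect_conj T \<beta> a1 a3 = rect_conj T \<beta> a1 m1 \<otimes>\<^bsub>Gpi T\<^esub> rect_conj T (\<beta> +++ linepath a1 m0) m0 a3"
proof -
  interpret group "Gpi T"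
    by (rule group_Gpi_T)
  define a2 a4 where "a2 = Complex (Re a3) (Im a1)" and "a4 = Complex (Re a1) (Im a3)"
  have "Re a1 \<le> Re a3" "Im a1 \<le> Im a3" "Re a1 \<le> Re m1" "Im a1 \<le> Im m1" "Re m0 \<le> Re a3" "Im m0 \<le> Im a3"
    using t im by (auto simp: m0_def m1_def)
  note images = path_image_rectpath[OF this(1,2)] path_image_rectpath[OF this(3,4)]
    path_image_rectpath[OF this(5,6)]
  show R1: "path_image (rectpath a1 m1) \<subseteq> - T" and R2: "path_image (rectpath m0 a3) \<subseteq> - T"
    using R tT t unfolding images by (auto simp: m0_def m1_def)
  note A = based_class_rectpath[OF R, folded a2_def a4_def]
  have corners: "Complex (Re m1) (Im a1) = m0" "Complex (Re a1) (Im m1) = a4"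
    "Complex (Re a3) (Im m0) = a2" "Complex (Re m0) (Im a3) = m1"
    by (simp_all add: m0_def m1_def a2_def a4_def)
  note B = based_class_rectpath[OF R1, unfolded corners]
    and C = based_class_rectpath[OF R2, unfolded corners]
  show \<beta>': "path_in (- T) (\<beta> +++ linepath a1 m0)"
    using \<beta> B(2) by (auto intro: path_in_linepath)
  have "m0 \<in> closed_segment a1 a2"
    using t by (auto simp: closed_segment_same_Im m0_def a2_def closed_segment_eq_real_ivl)
  moreover have "m1 \<in> closed_segment a3 a4"
    using t by (auto simp: closed_segment_same_Im m1_def a4_def closed_segment_eq_real_ivl)
  ultimately have split: "seg_class a1 a2 = seg_class a1 m0 \<otimes>\<^bsub>Gpi T\<^esub> seg_class m0 a2"
      "seg_class a3 a4 = seg_class a3 m1 \<otimes>\<^bsub>Gpi T\<^esub> seg_class m1 a4"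
    using seg_class_split[OF A(2)] seg_class_split[OF A(4)] by simp_all
  have carrier: "seg_class a1 m0 \<in> carrier (Gpi T)" "seg_class m0 a2 \<in> carrier (Gpi T)"
     "seg_class a2 a3 \<in> carrier (Gpi T)" "seg_class a3 m1 \<in> carrier (Gpi T)"
     "seg_class m1 a4 \<in> carrier (Gpi T)" "seg_class a4 a1 \<in> carrier (Gpi T)"
     "seg_class m0 m1 \<in> carrier (Gpi T)" "based_class T \<beta> \<in> carrier (Gpi T)"
    using A B C \<beta> by (auto intro: seg_class_carrier based_class_carrier)
  have rect: "based_class T (rectpath a1 a3) = seg_class a1 m0 \<otimes>\<^bsub>Gpi T\<^esub> based_class T (rectpath m0 a3)
      \<otimes>\<^bsub>Gpi T\<^esub> inv\<^bsub>Gpi T\<^esub> (seg_class a1 m0) \<otimes>\<^bsub>Gpi T\<^esub> based_class T (rectpath a1 m1)"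
    unfolding A(1) B(1) C(1) split seg_class_reverse[OF B(3)] using carrier
    by (simp add: m_assoc mult_inv_mult_cancel inv_mult_mult_cancel)
  have "based_class T (\<beta> +++ linepath a1 m0) = based_class T \<beta> \<otimes>\<^bsub>Gpi T\<^esub> seg_class a1 m0"
    using \<beta> B(2) by (intro based_class_join path_in_linepath) auto
  moreover have "based_class T (rectpath m0 a3) \<in> carrier (Gpi T)" "based_class T (rectpath a1 m1) \<in> carrier (Gpi T)"
    using R1 R2 by (auto intro: based_class_carrier simp: path_in_def)
  ultimately show "rect_conj T \<beta> a1 a3 = rect_conj T \<beta> a1 m1 \<otimes>\<^bsub>Gpi T\<^esub> rect_conj T (\<beta> +++ linepath a1 m0) m0 a3"
    unfolding rect_conj_def rect using carrier
    by (simp add: m_assoc inv_mult_group mult_inv_mult_cancel inv_mult_mult_cancel)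
qed

lemma rect_conj_split_horizontal:
  assumes t: "Im a1 < t" "t < Im a3" and re: "Re a1 < Re a3"
    and R: "path_image (rectpath a1 a3) \<subseteq> - T" and tT: "\<forall>z\<in>T. Im z \<noteq> t"
    and \<beta>: "path_in (- T) \<beta>" "pathfinish \<beta> = a1"
  defines "n0 \<equiv> Complex (Re a1) t" and "n1 \<equiv> Complex (Re a3) t"
  shows "path_image (rectpath a1 n1) \<subseteq> - T" "path_image (rectpath n0 a3) \<subseteq> - T"
    "path_in (- T) (\<beta> +++ linepath a1 n0)"
    "rect_conj T \<beta> a1 a3 = rect_conj T (\<beta> +++ linepath a1 n0) n0 a3 \<otimes>\<^bsub>Gpi T\<^esub> rect_conj T \<beta> a1 n1"
proof -
  interpret group "Gpi T"
    by (rule group_Gpi_T)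
  define a2 a4 where "a2 = Complex (Re a3) (Im a1)" and "a4 = Complex (Re a1) (Im a3)"
  have "Re a1 \<le> Re a3" "Im a1 \<le> Im a3" "Re a1 \<le> Re n1" "Im a1 \<le> Im n1" "Re n0 \<le> Re a3" "Im n0 \<le> Im a3"
    using t re by (auto simp: n0_def n1_def)
  note images = path_image_rectpath[OF this(1,2)] path_image_rectpath[OF this(3,4)]
    path_image_rectpath[OF this(5,6)]
  show R1: "path_image (rectpath a1 n1) \<subseteq> - T" and R2: "path_image (rectpath n0 a3) \<subseteq> - T"
    using R tT t unfolding images by (auto simp: n0_def n1_def)
  note A = based_class_rectpath[OF R, folded a2_def a4_def]
  have corners: "Complex (Re n1) (Im a1) = a2" "Complex (Re a1) (Im n1) = n0"
    "Complex (Re a3) (Im n0) = n1" "Complex (Re n0) (Im a3) = a4"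
    by (simp_all add: n0_def n1_def a2_def a4_def)
  note B = based_class_rectpath[OF R1, unfolded corners]
    and C = based_class_rectpath[OF R2, unfolded corners]
  have s0: "closed_segment a1 n0 \<subseteq> - T"
    using B(5) by (simp add: closed_segment_commute)
  show \<beta>': "path_in (- T) (\<beta> +++ linepath a1 n0)"
    using \<beta> s0 by (auto intro: path_in_linepath)
  have "n1 \<in> closed_segment a2 a3"
    using t by (auto simp: closed_segment_same_Re n1_def a2_def closed_segment_eq_real_ivl)
  moreover have "n0 \<in> closed_segment a4 a1"
    using t by (auto simp: closed_segment_same_Re n0_def a4_def closed_segment_eq_real_ivl)
  ultimately have split: "seg_class a2 a3 = seg_class a2 n1 \<otimes>\<^bsub>Gpi T\<^esub> seg_class n1 a3"
      "seg_class a4 a1 = seg_class a4 n0 \<otimes>\<^bsub>Gpi T\<^esub> seg_class n0 a1"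
    using seg_class_split[OF A(3)] seg_class_split[OF A(5)] by simp_all
  have carrier: "seg_class a1 a2 \<in> carrier (Gpi T)" "seg_class a2 n1 \<in> carrier (Gpi T)"
     "seg_class n1 a3 \<in> carrier (Gpi T)" "seg_class a3 a4 \<in> carrier (Gpi T)"
     "seg_class a4 n0 \<in> carrier (Gpi T)" "seg_class n0 a1 \<in> carrier (Gpi T)"
     "seg_class n0 n1 \<in> carrier (Gpi T)" "based_class T \<beta> \<in> carrier (Gpi T)"
    using A B C \<beta> by (auto intro: seg_class_carrier based_class_carrier)
  have rect: "based_class T (rectpath a1 a3) = based_class T (rectpath a1 n1) \<otimes>\<^bsub>Gpi T\<^esub> seg_class a1 n0
      \<otimes>\<^bsub>Gpi T\<^esub> based_class T (rectpath n0 a3) \<otimes>\<^bsub>Gpi T\<^esub> inv\<^bsub>Gpi T\<^esub> (seg_class a1 n0)"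
    unfolding A(1) B(1) C(1) split seg_class_reverse[OF C(2)] seg_class_reverse[OF B(5)] using carrier
    by (simp add: m_assoc mult_inv_mult_cancel inv_mult_mult_cancel)
  have "based_class T (\<beta> +++ linepath a1 n0) = based_class T \<beta> \<otimes>\<^bsub>Gpi T\<^esub> seg_class a1 n0"
    using \<beta> s0 by (intro based_class_join path_in_linepath) auto
  moreover have "based_class T (rectpath n0 a3) \<in> carrier (Gpi T)" "based_class T (rectpath a1 n1) \<in> carrier (Gpi T)"
    "seg_class a1 n0 \<in> carrier (Gpi T)"
    using R1 R2 s0 by (auto intro: based_class_carrier seg_class_carrier simp: path_in_def)
  ultimately show "rect_conj T \<beta> a1 a3 = rect_conj T (\<beta> +++ linepath a1 n0) n0 a3 \<otimes>\<^bsub>Gpi T\<^esub> rect_conj T \<beta> a1 n1"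
    unfolding rect_conj_def rect using carrier
    by (simp add: m_assoc inv_mult_group mult_inv_mult_cancel inv_mult_mult_cancel)
qed

end

lemma closest_point_punctured:
  fixes K :: "'a::euclidean_space set"
  assumes "convex K" "closed K" "w \<in> interior K" "y \<noteq> w"
  shows "closest_point K y \<in> K - {w}"
proof (cases "y \<in> K")
  case True
  then show ?thesis
    using assms by (simp add: closest_point_self)
next
  case False
  have K: "K \<noteq> {}" "interior K \<noteq> {}"
    using assms(3) interior_subset by blast+
  then have "y \<in> affine hull K - rel_interior K"
    using False affine_hull_nonempty_interior[OF K(2)] rel_interior_subset by blast
  then have "closest_point K y \<in> rel_frontier K"
    by (rule closest_point_in_rel_frontier[OF assms(2) K(1)])
  then show ?thesis
    using rel_interior_nonempty_interior[OF K(2)] assms(2,3) by (auto simp: rel_frontier_def)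
qed

lemma homotopic_paths_retract:
  assumes "continuous_on A R" "R \<in> A \<rightarrow> B" "\<And>x. x \<in> B \<Longrightarrow> R x = x"
    and "homotopic_paths A p q" "path_image p \<subseteq> B" "path_image q \<subseteq> B"
  shows "homotopic_paths B p q"
proof -
  have "homotopic_paths B (R \<circ> p) (R \<circ> q)"
    using assms(4,1,2) by (rule homotopic_paths_continuous_image)
  moreover have "homotopic_paths B r (R \<circ> r)" if "path r" "path_image r \<subseteq> B" for r
    using that assms(3) by (intro homotopic_paths_eq) (auto simp: path_image_def image_subset_iff)
  ultimately show ?thesis
    using assms(4-6) homotopic_paths_imp_path
    by (meson homotopic_paths_sym homotopic_paths_trans)
qed

text \<open>The paths are homotopic in the punctured plane by their winding numbers, and the closest-point
  retraction onto the body keeps the homotopy away from the puncture.\<close>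

lemma homotopic_paths_punctured_convex:
  assumes K: "convex K" "compact K" "w \<in> interior K"
    and p: "path p" "path_image p \<subseteq> K - {w}" and q: "path q" "path_image q \<subseteq> K - {w}"
    and ends: "pathstart p = pathstart q" "pathfinish p = pathfinish q"
    and wn: "winding_number p w = winding_number q w"
  shows "homotopic_paths (K - {w}) p q"
proof (rule homotopic_paths_retract)
  show "homotopic_paths (- {w}) p q"
    using winding_number_homotopic_paths_eq[of p w q] p q ends wn by auto
  have "K \<noteq> {}"
    using K(3) interior_subset by blast
  then show "continuous_on (- {w}) (closest_point K)"
    using K(1) compact_imp_closed[OF K(2)] by (intro continuous_on_closest_point)
  show "closest_point K \<in> - {w} \<rightarrow> K - {w}"
    using closest_point_punctured[OF K(1) compact_imp_closed[OF K(2)] K(3)] by blast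
qed (use p q in \<open>auto simp: closest_point_self\<close>)

lemma winding_number_conj_path:
  assumes "path \<sigma>" "path c" "pathfinish \<sigma> = pathstart c" "pathfinish c = pathstart c"
    "w \<notin> path_image \<sigma>" "w \<notin> path_image c"
  shows "winding_number (\<sigma> +++ c +++ reversepath \<sigma>) w = winding_number c w"
  using assms by (simp add: winding_number_join winding_number_reversepath path_image_join)

lemma winding_number_reversepath_circlepath_centre:
  "r > 0 \<Longrightarrow> winding_number (reversepath (circlepath z r)) z = -1"
  using winding_number_reversepath[of "circlepath z r" z] winding_number_circlepath_centre[of r z] by simp

lemma homotopic_paths_rectpath_circlepath:
  assumes w: "w \<in> box a1 a3" and r: "r > 0"
    and K: "convex K" "compact K" "cbox a1 a3 \<subseteq> K" "cball w r \<subseteq> K"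
  defines "\<sigma> \<equiv> linepath a1 (w + of_real r)"
  shows "homotopic_paths (K - {w}) (reversepath (rectpath a1 a3))
           (\<sigma> +++ reversepath (circlepath w r) +++ reversepath \<sigma>)"
proof (rule homotopic_paths_punctured_convex)
  have a13: "Re a1 < Re a3" "Im a1 < Im a3"
    using w by (auto simp: in_box_complex_iff)
  have "w + of_real r \<in> K" "a1 \<in> K"
    using r a13 K(3,4) by (auto simp: dist_norm in_cbox_complex_iff subset_iff)
  then have "path_image \<sigma> \<subseteq> K"
    using K(1) by (simp add: \<sigma>_def closed_segment_subset)
  moreover have "w \<notin> path_image \<sigma>"
  proof
    assume "w \<in> path_image \<sigma>"
    then obtain u where u: "0 \<le> u" "u \<le> 1" "w = (1 - u) *\<^sub>R a1 + u *\<^sub>R (w + of_real r)"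
      by (auto simp: \<sigma>_def closed_segment_def)
    then have "(1 - u) * (Im w - Im a1) = 0"
      by (simp add: complex_eq_iff algebra_simps)
    then have "u = 1"
      using w by (simp add: in_box_complex_iff)
    then show False
      using u r by (simp add: complex_eq_iff)
  qed
  moreover have "sphere w r \<subseteq> K - {w}"
    using r K(4) by fastforce
  moreover have "pathfinish \<sigma> = w + of_real r"
    by (simp add: \<sigma>_def)
  ultimately show "path_image (\<sigma> +++ reversepath (circlepath w r) +++ reversepath \<sigma>) \<subseteq> K - {w}"
    using r by (auto simp: path_image_join)
  show "path_image (reversepath (rectpath a1 a3)) \<subseteq> K - {w}"
    using w a13 K(3) path_image_rectpath_cbox_minus_box[of a1 a3] by auto
  have "winding_number (\<sigma> +++ reversepath (circlepath w r) +++ reversepath \<sigma>) w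
      = winding_number (reversepath (circlepath w r)) w"
    using \<open>w \<notin> path_image \<sigma>\<close> r by (intro winding_number_conj_path) (auto simp: \<sigma>_def)
  then show "winding_number (reversepath (rectpath a1 a3)) w
      = winding_number (\<sigma> +++ reversepath (circlepath w r) +++ reversepath \<sigma>) w"
    using r w a13 path_image_rectpath_cbox_minus_box[of a1 a3]
      winding_number_reversepath[of "rectpath a1 a3" w] winding_number_rectpath[OF w]
    by (simp add: winding_number_reversepath_circlepath_centre)
  show "w \<in> interior K"
    using w K(3) box_subset_cbox interior_maximal[OF _ open_box] by blast
qed (use K in \<open>auto simp: \<sigma>_def\<close>)

lemma real_between_notin_finite:
  fixes A :: "real set"
  assumes "finite A" "a < b"
  obtains t where "a < t" "t < b" "t \<notin> A"
proof -
  have "infinite {a<..<b}"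
    using assms(2) by simp
  then have "{a<..<b} - A \<noteq> {}"
    using assms(1) by (metis finite_subset Diff_eq_empty_iff)
  then obtain t where "t \<in> {a<..<b} - A"
    by blast
  then show ?thesis
    using that by auto
qed

context punctured_plane
begin

lemma rect_conj_empty:
  assumes "Re a1 < Re a3" "Im a1 < Im a3" "cbox a1 a3 \<inter> T = {}" "path_in (- T) \<beta>"
  shows "rect_conj T \<beta> a1 a3 = \<one>\<^bsub>Gpi T\<^esub>"
proof -
  interpret group "Gpi T"
    by (rule group_Gpi_T)
  have sub: "path_image (rectpath a1 a3) \<subseteq> cbox a1 a3"
    using assms by (intro path_image_rectpath_subset_cbox) auto
  have a1: "a1 \<in> cbox a1 a3"
    using assms by (auto simp: in_cbox_complex_iff)
  have "homotopic_paths (- T) (rectpath a1 a3) (linepath a1 a1)"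
  proof (rule homotopic_paths_linear)
    fix t :: real
    assume "t \<in> {0..1}"
    then have "rectpath a1 a3 t \<in> cbox a1 a3"
      using sub by (auto simp: path_image_def)
    then have "closed_segment (rectpath a1 a3 t) (linepath a1 a1 t) \<subseteq> cbox a1 a3"
      using a1 by (intro closed_segment_subset) auto
    then show "closed_segment (rectpath a1 a3 t) (linepath a1 a1 t) \<subseteq> - T"
      using assms(3) by blast
  qed auto
  then have "based_class T (rectpath a1 a3) = \<one>\<^bsub>Gpi T\<^esub>"
    using a1 assms(3) based_class_cong based_class_const by blast
  then show ?thesis
    unfolding rect_conj_def using based_class_carrier[OF assms(4)] by simp
qed

lemma rect_conj_eq_path_class:
  assumes "path_image (rectpath a1 a3) \<subseteq> - T" "path_in (- T) \<beta>" "pathstart \<beta> = bp" "pathfinish \<beta> = a1"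
  shows "rect_conj T \<beta> a1 a3 = path_class T (\<beta> +++ reversepath (rectpath a1 a3) +++ reversepath \<beta>)"
proof -
  have "path_in (- T) (rectpath a1 a3)"
    using assms(1) by (simp add: path_in_def)
  then show ?thesis
    unfolding rect_conj_def using assms(2-4)
    by (simp add: path_class_conj based_class_reversepath path_in_reversepath)
qed

lemma small_loop_eq_rect_conj:
  assumes \<alpha>: "path_in (- T) \<alpha>" "pathstart \<alpha> = bp" "pathfinish \<alpha> = w + of_real r"
    and h: "homotopic_paths (- T) (reversepath (rectpath a1 a3))
              (linepath a1 (w + of_real r) +++ reversepath (circlepath w r) +++ linepath (w + of_real r) a1)"
  shows "path_class T (\<alpha> +++ reversepath (circlepath w r) +++ reversepath \<alpha>)
       = rect_conj T (\<alpha> +++ linepath (w + of_real r) a1) a1 a3"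
proof -
  interpret group "Gpi T"
    by (rule group_Gpi_T)
  define \<sigma> c where "\<sigma> = linepath a1 (w + of_real r)" and "c = reversepath (circlepath w r)"
  have paths: "path_in (- T) \<sigma>" "path_in (- T) c" "path_in (- T) (rectpath a1 a3)"
    using homotopic_paths_imp_subset[OF h]
    by (auto simp: path_in_def path_image_join \<sigma>_def c_def)
  have ends: "pathstart \<sigma> = a1" "pathfinish \<sigma> = w + of_real r" "pathstart c = w + of_real r"
      "pathfinish c = w + of_real r"
    by (simp_all add: \<sigma>_def c_def)
  have carrier: "based_class T \<sigma> \<in> carrier (Gpi T)" "based_class T c \<in> carrier (Gpi T)"
    "based_class T \<alpha> \<in> carrier (Gpi T)" "based_class T (rectpath a1 a3) \<in> carrier (Gpi T)"
    using paths \<alpha> by (auto intro: based_class_carrier)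
  have "inv\<^bsub>Gpi T\<^esub> (based_class T (rectpath a1 a3)) = based_class T (\<sigma> +++ c +++ reversepath \<sigma>)"
    using based_class_reversepath[OF paths(3)] based_class_cong[OF h] by (simp add: \<sigma>_def c_def)
  also have "\<dots> = based_class T \<sigma> \<otimes>\<^bsub>Gpi T\<^esub> based_class T c \<otimes>\<^bsub>Gpi T\<^esub> inv\<^bsub>Gpi T\<^esub> (based_class T \<sigma>)"
  proof -
    have r: "path_in (- T) (reversepath \<sigma>)" and j: "path_in (- T) (c +++ reversepath \<sigma>)"
      using paths ends by auto
    show ?thesis
      using based_class_join[OF paths(1) j] based_class_join[OF paths(2) r] ends paths
      by (simp add: based_class_reversepath based_class_carrier m_assoc)
  qed
  finally have inv_rect: "inv\<^bsub>Gpi T\<^esub> (based_class T (rectpath a1 a3))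
      = based_class T \<sigma> \<otimes>\<^bsub>Gpi T\<^esub> based_class T c \<otimes>\<^bsub>Gpi T\<^esub> inv\<^bsub>Gpi T\<^esub> (based_class T \<sigma>)" .
  have "based_class T (\<alpha> +++ reversepath \<sigma>) = based_class T \<alpha> \<otimes>\<^bsub>Gpi T\<^esub> inv\<^bsub>Gpi T\<^esub> (based_class T \<sigma>)"
    using based_class_join[OF \<alpha>(1) path_in_reversepath[OF paths(1)]] \<alpha> ends
    by (simp add: based_class_reversepath[OF paths(1)])
  then have "rect_conj T (\<alpha> +++ reversepath \<sigma>) a1 a3
      = based_class T \<alpha> \<otimes>\<^bsub>Gpi T\<^esub> based_class T c \<otimes>\<^bsub>Gpi T\<^esub> inv\<^bsub>Gpi T\<^esub> (based_class T \<alpha>)"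
    unfolding rect_conj_def inv_rect using carrier
    by (simp add: m_assoc inv_mult_group mult_inv_mult_cancel inv_mult_mult_cancel)
  also have "\<dots> = path_class T (\<alpha> +++ c +++ reversepath \<alpha>)"
    using paths ends \<alpha> by (intro path_class_conj[symmetric]) auto
  finally show ?thesis
    by (simp add: \<sigma>_def c_def)
qed

lemma rect_conj_single:
  assumes re: "Re a1 < Re a3" and im: "Im a1 < Im a3" and w: "cbox a1 a3 \<inter> T = {w}"
    and R: "path_image (rectpath a1 a3) \<subseteq> - T"
    and \<beta>: "path_in (- T) \<beta>" "pathstart \<beta> = bp" "pathfinish \<beta> = a1"
  shows "rect_conj T \<beta> a1 a3 \<in> small_loops T w"
proof -
  interpret group "Gpi T"
    by (rule group_Gpi_T)
  have wT: "w \<in> T" "w \<in> cbox a1 a3"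
    using w by auto
  then have wbox: "w \<in> box a1 a3"
    using R path_image_rectpath_cbox_minus_box[of a1 a3] re im by auto
  obtain \<delta> where \<delta>: "\<delta> > 0" "cball w \<delta> \<subseteq> box a1 a3"
    using open_contains_cball[of "box a1 a3"] wbox by (auto simp: open_box)
  define \<sigma> where "\<sigma> = linepath a1 (w + of_real \<delta>)"
  have "homotopic_paths (cbox a1 a3 - {w}) (reversepath (rectpath a1 a3))
      (\<sigma> +++ reversepath (circlepath w \<delta>) +++ reversepath \<sigma>)"
    unfolding \<sigma>_def using wbox \<delta> box_subset_cbox
    by (intro homotopic_paths_rectpath_circlepath) auto
  moreover have "cbox a1 a3 - {w} \<subseteq> - T"
    using w by auto
  ultimately have h: "homotopic_paths (- T) (reversepath (rectpath a1 a3))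
      (\<sigma> +++ reversepath (circlepath w \<delta>) +++ reversepath \<sigma>)"
    by (rule homotopic_paths_subset)
  have \<sigma>_ends: "pathstart \<sigma> = a1" "pathfinish \<sigma> = w + of_real \<delta>"
    by (simp_all add: \<sigma>_def)
  then have \<sigma>: "path_in (- T) \<sigma>"
    using homotopic_paths_imp_subset[OF h] by (auto simp: path_in_def path_image_join \<sigma>_def)
  have "homotopic_paths (- T) (\<beta> +++ \<sigma> +++ reversepath \<sigma>) (\<beta> +++ linepath a1 a1)"
    using \<beta> \<sigma> \<sigma>_ends homotopic_paths_rinv[of \<sigma> "- T"]
    by (intro homotopic_paths_join_right) (auto simp: path_in_def)
  also have "homotopic_paths (- T) \<dots> \<beta>"
    using \<beta> by (intro homotopic_paths_rid') (auto simp: path_in_def)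
  finally have "based_class T (\<beta> +++ \<sigma> +++ reversepath \<sigma>) = based_class T \<beta>"
    by (rule based_class_cong)
  moreover have "based_class T (\<beta> +++ \<sigma> +++ reversepath \<sigma>) = based_class T ((\<beta> +++ \<sigma>) +++ reversepath \<sigma>)"
    using \<beta> \<sigma> \<sigma>_ends by (intro based_class_cong homotopic_paths_assoc_left) auto
  ultimately have "rect_conj T \<beta> a1 a3 = rect_conj T ((\<beta> +++ \<sigma>) +++ reversepath \<sigma>) a1 a3"
    by (simp add: rect_conj_def)
  also have "\<dots> = path_class T ((\<beta> +++ \<sigma>) +++ reversepath (circlepath w \<delta>) +++ reversepath (\<beta> +++ \<sigma>))"
    using \<beta> \<sigma> \<sigma>_ends h unfolding \<sigma>_def reversepath_linepath
    by (intro small_loop_eq_rect_conj[symmetric]) auto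
  also have "\<dots> \<in> small_loops T w"
  proof -
    have "cball w \<delta> \<inter> T = {w}"
      using \<delta> wT w box_subset_cbox by fastforce
    then show ?thesis
      unfolding small_loops_def path_class_def[symmetric]
      using \<delta> \<beta> \<sigma> \<sigma>_ends unfolding path_in_def
      by (intro CollectI exI[of _ "\<beta> +++ \<sigma>"] exI[of _ \<delta>]) (auto simp: path_image_join)
  qed
  finally show ?thesis .
qed

text \<open>The cut is a vertical or horizontal line that separates two points of \<open>T\<close> and misses \<open>T\<close>.\<close>

lemma rect_conj_split:
  assumes "2 \<le> card (cbox a1 a3 \<inter> T)" "Re a1 < Re a3" "Im a1 < Im a3"
    "path_image (rectpath a1 a3) \<subseteq> - T" "path_in (- T) \<beta>" "pathfinish \<beta> = a1"
  obtains b1 b3 \<beta>1 c1 c3 \<beta>2 where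
    "rect_conj T \<beta> a1 a3 = rect_conj T \<beta>1 b1 b3 \<otimes>\<^bsub>Gpi T\<^esub> rect_conj T \<beta>2 c1 c3"
    "Re b1 < Re b3" "Im b1 < Im b3" "Re c1 < Re c3" "Im c1 < Im c3"
    "path_image (rectpath b1 b3) \<subseteq> - T" "path_image (rectpath c1 c3) \<subseteq> - T"
    "cbox b1 b3 \<inter> T \<subset> cbox a1 a3 \<inter> T" "cbox c1 c3 \<inter> T \<subset> cbox a1 a3 \<inter> T"
    "path_in (- T) \<beta>1" "pathstart \<beta>1 = pathstart \<beta>" "pathfinish \<beta>1 = b1"
    "path_in (- T) \<beta>2" "pathstart \<beta>2 = pathstart \<beta>" "pathfinish \<beta>2 = c1"
proof -
  obtain u v where uv: "u \<in> cbox a1 a3 \<inter> T" "v \<in> cbox a1 a3 \<inter> T" "u \<noteq> v"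
    using assms(1) finite_T
    by (metis card_le_Suc0_iff_eq finite_Int not_less_eq_eq numeral_2_eq_2)
  show ?thesis
  proof (cases "Re u = Re v")
    case False
    then obtain p q where pq: "p \<in> cbox a1 a3 \<inter> T" "q \<in> cbox a1 a3 \<inter> T" "Re p < Re q"
      using uv by (metis linorder_neqE_linordered_idom)
    obtain t where t: "Re p < t" "t < Re q" "t \<notin> Re ` T"
      using real_between_notin_finite[of "Re ` T" "Re p" "Re q"] finite_T pq by blast
    then have ta: "Re a1 < t" "t < Re a3"
      using pq by (auto simp: in_cbox_complex_iff)
    note cut = rect_conj_split_vertical[OF ta assms(3,4) _ assms(5,6)]
    have "cbox a1 (Complex t (Im a3)) \<subseteq> cbox a1 a3" "cbox (Complex t (Im a1)) a3 \<subseteq> cbox a1 a3"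
      "q \<notin> cbox a1 (Complex t (Im a3))" "p \<notin> cbox (Complex t (Im a1)) a3"
      using ta t by (auto simp: in_cbox_complex_iff)
    then have "cbox a1 (Complex t (Im a3)) \<inter> T \<subset> cbox a1 a3 \<inter> T"
      "cbox (Complex t (Im a1)) a3 \<inter> T \<subset> cbox a1 a3 \<inter> T"
      using pq by blast+
    then show ?thesis
      by (intro that[OF cut(4)]) (use ta assms cut t in \<open>auto simp: in_cbox_complex_iff\<close>)
  next
    case True
    then have "Im u \<noteq> Im v"
      using uv(3) by (simp add: complex_eq_iff)
    then obtain p q where pq: "p \<in> cbox a1 a3 \<inter> T" "q \<in> cbox a1 a3 \<inter> T" "Im p < Im q"
      using uv by (metis linorder_neqE_linordered_idom)
    obtain t where t: "Im p < t" "t < Im q" "t \<notin> Im ` T"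
      using real_between_notin_finite[of "Im ` T" "Im p" "Im q"] finite_T pq by blast
    then have ta: "Im a1 < t" "t < Im a3"
      using pq by (auto simp: in_cbox_complex_iff)
    note cut = rect_conj_split_horizontal[OF ta assms(2,4) _ assms(5,6)]
    have "cbox a1 (Complex (Re a3) t) \<subseteq> cbox a1 a3" "cbox (Complex (Re a1) t) a3 \<subseteq> cbox a1 a3"
      "q \<notin> cbox a1 (Complex (Re a3) t)" "p \<notin> cbox (Complex (Re a1) t) a3"
      using ta t by (auto simp: in_cbox_complex_iff)
    then have "cbox (Complex (Re a1) t) a3 \<inter> T \<subset> cbox a1 a3 \<inter> T"
      "cbox a1 (Complex (Re a3) t) \<inter> T \<subset> cbox a1 a3 \<inter> T"
      using pq by blast+
    then show ?thesis
      by (intro that[OF cut(4)]) (use ta assms cut t in \<open>auto simp: in_cbox_complex_iff\<close>)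
  qed
qed

lemma rect_conj_in_Qprods:
  assumes "Re a1 < Re a3" "Im a1 < Im a3" "path_image (rectpath a1 a3) \<subseteq> - T"
    "cbox a1 a3 \<inter> T \<inter> Y = {}" "path_in (- T) \<beta>" "pathstart \<beta> = bp" "pathfinish \<beta> = a1"
  shows "rect_conj T \<beta> a1 a3 \<in> Qprods Y T"
  using assms
proof (induction "card (cbox a1 a3 \<inter> T)" arbitrary: a1 a3 \<beta> rule: less_induct)
  case less
  have fin: "finite (cbox a1 a3 \<inter> T)"
    using finite_T by simp
  consider "cbox a1 a3 \<inter> T = {}" | w where "cbox a1 a3 \<inter> T = {w}" | "2 \<le> card (cbox a1 a3 \<inter> T)"
  proof -
    consider "card (cbox a1 a3 \<inter> T) = 0" | "card (cbox a1 a3 \<inter> T) = 1" | "2 \<le> card (cbox a1 a3 \<inter> T)"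
      by linarith
    then show thesis
      using that fin by cases (auto simp: card_1_singleton_iff)
  qed
  then show ?case
  proof cases
    case 1
    then show ?thesis
      using rect_conj_empty[OF less.prems(1,2) 1 less.prems(5)] one_in_Qprods by simp
  next
    case (2 w)
    then have "rect_conj T \<beta> a1 a3 \<in> Qset Y T"
      using rect_conj_single[OF less.prems(1,2) 2 less.prems(3,5-7)] less.prems(4)
      unfolding Qset_def by blast
    then show ?thesis
      by (rule subsetD[OF Qset_subset_Qprods[OF bp_notin_T]])
  next
    case 3
    obtain b1 b3 \<beta>1 c1 c3 \<beta>2 where split:
      "rect_conj T \<beta> a1 a3 = rect_conj T \<beta>1 b1 b3 \<otimes>\<^bsub>Gpi T\<^esub> rect_conj T \<beta>2 c1 c3"
      "Re b1 < Re b3" "Im b1 < Im b3" "Re c1 < Re c3" "Im c1 < Im c3"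
      "path_image (rectpath b1 b3) \<subseteq> - T" "path_image (rectpath c1 c3) \<subseteq> - T"
      "cbox b1 b3 \<inter> T \<subset> cbox a1 a3 \<inter> T" "cbox c1 c3 \<inter> T \<subset> cbox a1 a3 \<inter> T"
      "path_in (- T) \<beta>1" "pathstart \<beta>1 = pathstart \<beta>" "pathfinish \<beta>1 = b1"
      "path_in (- T) \<beta>2" "pathstart \<beta>2 = pathstart \<beta>" "pathfinish \<beta>2 = c1"
      by (rule rect_conj_split[OF 3 less.prems(1-3,5,7)])
    have "cbox b1 b3 \<inter> T \<inter> Y = {}" "cbox c1 c3 \<inter> T \<inter> Y = {}"
      using split(8,9) less.prems(4) by blast+
    then have "rect_conj T \<beta>1 b1 b3 \<in> Qprods Y T" "rect_conj T \<beta>2 c1 c3 \<in> Qprods Y T"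
      using less.prems(6) split(11,14)
      by (intro less.hyps[OF psubset_card_mono[OF fin split(8)] split(2,3,6) _ split(10) _ split(12)]
          less.hyps[OF psubset_card_mono[OF fin split(9)] split(4,5,7) _ split(13) _ split(15)]; simp)+
    then show ?thesis
      unfolding split(1) by (rule mult_in_Qprods[OF bp_notin_T])
  qed
qed

end

section \<open>Pushing paths out of neighbourhoods of the punctures\<close>

lemma retraction_onto_frontier_convex:
  fixes U A :: "complex set"
  assumes U: "convex U" "open U" "bounded U" "z \<in> U" and zA: "z \<notin> A" and fr: "frontier U \<subseteq> A"
  obtains R where "continuous_on A R" "R \<in> A \<rightarrow> A - U" "\<And>x. x \<in> A - U \<Longrightarrow> R x = x"
proof -
  have ri: "rel_interior U = U"
    using rel_interior_open[OF U(2)] .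
  have "affine hull U = UNIV"
    using U(2,4) affine_hull_open by blast
  moreover have "rel_frontier U = frontier U"
    using ri U(2) by (simp add: rel_frontier_def frontier_def interior_open)
  moreover have "rel_frontier U retract_of (affine hull U - {z})"
    using U ri by (intro rel_frontier_retract_of_punctured_affine_hull) auto
  ultimately obtain r where r: "continuous_on (- {z}) r" "r \<in> - {z} \<rightarrow> frontier U"
    "\<And>x. x \<in> frontier U \<Longrightarrow> r x = x"
    unfolding retract_of_def retraction_def by (auto simp: Compl_eq_Diff_UNIV)
  define R where "R x = (if x \<in> U then r x else x)" for x
  have AU: "A = (A \<inter> closure U) \<union> (A \<inter> - U)"
    using closure_subset by blast
  have "continuous_on ((A \<inter> closure U) \<union> (A \<inter> - U)) (\<lambda>x. if x \<in> U then r x else x)"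
  proof (rule continuous_on_cases_local)
    show "closedin (top_of_set (A \<inter> closure U \<union> A \<inter> - U)) (A \<inter> closure U)"
      using AU[symmetric] closedin_closed_Int[of "closure U" A] by simp
    show "closedin (top_of_set (A \<inter> closure U \<union> A \<inter> - U)) (A \<inter> - U)"
      using AU[symmetric] closedin_closed_Int[of "- U" A] U(2) by (simp add: closed_Compl)
    show "continuous_on (A \<inter> closure U) r"
      using zA by (rule_tac continuous_on_subset[OF r(1)]) auto
    fix x
    assume "x \<in> A \<inter> closure U \<and> x \<notin> U \<or> x \<in> A \<inter> - U \<and> x \<in> U"
    then have "x \<in> frontier U"
      using U(2) by (auto simp: frontier_def interior_open)
    then show "r x = x"
      using r(3) by simp
  qed simp
  then have "continuous_on A R"
    using AU unfolding R_def by simp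
  moreover have "R \<in> A \<rightarrow> A - U"
    using r(2) zA fr U(2) by (force simp: R_def frontier_def interior_open)
  ultimately show ?thesis
    by (rule that) (simp add: R_def)
qed

lemma homotopic_paths_avoid_convex:
  fixes U A :: "complex set"
  assumes "convex U" "open U" "bounded U" "z \<in> U" "z \<notin> A" "frontier U \<subseteq> A"
    and "homotopic_paths A g1 g2" "path_image g1 \<subseteq> A - U" "path_image g2 \<subseteq> A - U"
  shows "homotopic_paths (A - U) g1 g2"
proof -
  obtain R where "continuous_on A R" "R \<in> A \<rightarrow> A - U" "\<And>x. x \<in> A - U \<Longrightarrow> R x = x"
    using retraction_onto_frontier_convex[OF assms(1-6)] by blast
  then show ?thesis
    using assms(7-9) by (rule homotopic_paths_retract)
qed

definition isolating_nbhds :: "complex set \<Rightarrow> (complex \<Rightarrow> complex set) \<Rightarrow> bool" where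
  "isolating_nbhds T U \<longleftrightarrow> (\<forall>z\<in>T. convex (U z) \<and> open (U z) \<and> bounded (U z) \<and> U z \<inter> T = {z} \<and>
      (\<forall>z'\<in>T. z' \<noteq> z \<longrightarrow> closure (U z) \<inter> closure (U z') = {}))"

lemma adapted_imp_isolating_nbhds: "adapted Y P U \<Longrightarrow> isolating_nbhds P U"
  unfolding adapted_def isolating_nbhds_def
  by (metis bounded_subset closure_subset compact_imp_bounded)

lemma isolating_nbhds_cover: "isolating_nbhds T U \<Longrightarrow> T \<subseteq> \<Union>(U ` T)"
  unfolding isolating_nbhds_def by blast

lemma isolating_nbhds_frontier:
  assumes "isolating_nbhds T U" "z \<in> T"
  shows "\<And>z'. z' \<in> T \<Longrightarrow> frontier (U z) \<inter> U z' = {}" "frontier (U z) \<inter> T = {}"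
proof -
  have disj: "frontier (U z) \<inter> U z' = {}" if "z' \<in> T" for z'
  proof (cases "z = z'")
    case True
    then show ?thesis
      using assms by (auto simp: frontier_def interior_open isolating_nbhds_def)
  next
    case False
    then have "closure (U z) \<inter> closure (U z') = {}"
      using assms that unfolding isolating_nbhds_def by auto
    then show ?thesis
      using closure_subset[of "U z'"] by (auto simp: frontier_def)
  qed
  then show "\<And>z'. z' \<in> T \<Longrightarrow> frontier (U z) \<inter> U z' = {}"
    by blast
  have "t \<in> U t" if "t \<in> T" for t
    using assms(1) that unfolding isolating_nbhds_def by blast
  then show "frontier (U z) \<inter> T = {}"
    using disj by blast
qed

lemma homotopic_paths_avoid_nbhds:
  assumes fin: "finite T" and U: "isolating_nbhds T U" and h: "homotopic_paths (- T) g1 g2"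
    and g: "path_image g1 \<subseteq> - \<Union>(U ` T)" "path_image g2 \<subseteq> - \<Union>(U ` T)"
  shows "homotopic_paths (- \<Union>(U ` T)) g1 g2"
proof -
  have TU: "T \<subseteq> \<Union>(U ` T)"
    using isolating_nbhds_cover[OF U] .
  then have gT: "path_image g1 \<subseteq> - T" "path_image g2 \<subseteq> - T"
    using g by blast+
  have "S \<subseteq> T \<Longrightarrow> homotopic_paths (- T - \<Union>(U ` S)) g1 g2" if "finite S" for S
    using that
  proof (induction S rule: finite_induct)
    case empty
    then show ?case
      using h by simp
  next
    case (insert z0 S)
    have z0: "z0 \<in> T"
      using insert.prems by auto
    have Uz0: "convex (U z0)" "open (U z0)" "bounded (U z0)" "z0 \<in> U z0"
      using U z0 unfolding isolating_nbhds_def by auto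
    have fr: "frontier (U z0) \<subseteq> - T - \<Union>(U ` S)"
      using isolating_nbhds_frontier[OF U z0] insert.prems by blast
    have "homotopic_paths (- T - \<Union>(U ` S) - U z0) g1 g2"
      by (rule homotopic_paths_avoid_convex[OF Uz0 _ fr insert.IH]) (use z0 insert.prems g gT in auto)
    moreover have "- T - \<Union>(U ` S) - U z0 = - T - \<Union>(U ` insert z0 S)"
      by auto
    ultimately show ?case
      by simp
  qed
  moreover have "- T - \<Union>(U ` T) = - \<Union>(U ` T)"
    using TU by blast
  ultimately show ?thesis
    using fin by (metis subset_refl)
qed

lemma iota_path_class:
  assumes fin: "finite P" and U: "isolating_nbhds P U" and P': "P' \<subseteq> \<Union>(U ` P)"
    and g: "path g" "path_image g \<subseteq> - \<Union>(U ` P)"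
  shows "iota U P P' (path_class P g) = path_class P' g"
proof
  have sub: "- \<Union>(U ` P) \<subseteq> - P'"
    using P' by blast
  show "iota U P P' (path_class P g) \<subseteq> path_class P' g"
  proof
    fix h
    assume "h \<in> iota U P P' (path_class P g)"
    then obtain g1 where g1: "homotopic_paths (- P) g g1" "path_image g1 \<subseteq> - \<Union>(U ` P)"
      "homotopic_paths (- P') g1 h"
      unfolding iota_def path_class_def by blast
    have "homotopic_paths (- \<Union>(U ` P)) g g1"
      by (rule homotopic_paths_avoid_nbhds[OF fin U g1(1) g(2) g1(2)])
    then have "homotopic_paths (- P') g g1"
      using homotopic_paths_subset sub by blast
    then show "h \<in> path_class P' g"
      using g1(3) unfolding path_class_def by (blast intro: homotopic_paths_trans)
  qed
  show "path_class P' g \<subseteq> iota U P P' (path_class P g)"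
  proof
    fix h
    assume h: "h \<in> path_class P' g"
    have "path_image g \<subseteq> - P"
      using g(2) isolating_nbhds_cover[OF U] by blast
    then have "g \<in> path_class P g"
      using g(1) by (simp add: path_class_def)
    then show "h \<in> iota U P P' (path_class P g)"
      using h g unfolding iota_def path_class_def by blast
  qed
qed

lemma iota_iota:
  assumes fin: "finite P'" and U': "isolating_nbhds P' U'"
    and sub: "P' \<subseteq> \<Union>(U ` P)" "\<Union>(U' ` P') \<subseteq> \<Union>(U ` P)" "P'' \<subseteq> \<Union>(U' ` P')"
  shows "iota U P P'' x = iota U' P' P'' (iota U P P' x)"
proof
  show "iota U P P'' x \<subseteq> iota U' P' P'' (iota U P P' x)"
  proof
    fix h
    assume "h \<in> iota U P P'' x"
    then obtain g where g: "g \<in> x" "path_image g \<subseteq> - \<Union>(U ` P)" "homotopic_paths (- P'') g h"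
      unfolding iota_def by blast
    have "path g"
      using g(3) homotopic_paths_imp_path by blast
    moreover have "path_image g \<subseteq> - P'"
      using g(2) sub(1) by blast
    ultimately have "homotopic_paths (- P') g g"
      by simp
    then have "g \<in> iota U P P' x"
      unfolding iota_def using g(1,2) by blast
    moreover have "path_image g \<subseteq> - \<Union>(U' ` P')"
      using g(2) sub(2) by blast
    ultimately show "h \<in> iota U' P' P'' (iota U P P' x)"
      using g(3) unfolding iota_def by blast
  qed
  show "iota U' P' P'' (iota U P P' x) \<subseteq> iota U P P'' x"
  proof
    fix h
    assume "h \<in> iota U' P' P'' (iota U P P' x)"
    then obtain g' g where g': "path_image g' \<subseteq> - \<Union>(U' ` P')" "homotopic_paths (- P'') g' h"
      and g: "g \<in> x" "path_image g \<subseteq> - \<Union>(U ` P)" "homotopic_paths (- P') g g'"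
      unfolding iota_def by blast
    have "path_image g \<subseteq> - \<Union>(U' ` P')"
      using g(2) sub(2) by blast
    then have "homotopic_paths (- \<Union>(U' ` P')) g g'"
      by (rule homotopic_paths_avoid_nbhds[OF fin U' g(3) _ g'(1)])
    then have "homotopic_paths (- P'') g h"
      using homotopic_paths_subset sub(3) g'(2) by (blast intro: homotopic_paths_trans)
    then show "h \<in> iota U P P'' x"
      using g unfolding iota_def by blast
  qed
qed

definition well_separated :: "complex set \<Rightarrow> real \<Rightarrow> bool" where
  "well_separated T \<rho> \<longleftrightarrow> \<rho> > 0 \<and> (\<forall>z\<in>T. \<forall>z'\<in>T. z \<noteq> z' \<longrightarrow> dist z z' > 4 * \<rho>)"

lemma well_separated_isolating_nbhds:
  assumes "well_separated T \<rho>"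
  shows "isolating_nbhds T (\<lambda>z. ball z \<rho>)"
proof -
  have \<rho>: "\<rho> > 0" and far: "\<And>z z'. z \<in> T \<Longrightarrow> z' \<in> T \<Longrightarrow> z \<noteq> z' \<Longrightarrow> dist z z' > 4 * \<rho>"
    using assms by (auto simp: well_separated_def)
  show ?thesis
    unfolding isolating_nbhds_def
  proof (intro ballI conjI impI)
    fix z
    assume z: "z \<in> T"
    show "convex (ball z \<rho>)" "open (ball z \<rho>)" "bounded (ball z \<rho>)"
      by auto
    show "ball z \<rho> \<inter> T = {z}"
      using far[OF z] z \<rho> by force
    fix z'
    assume "z' \<in> T" "z' \<noteq> z"
    then have "dist z z' > 4 * \<rho>"
      using far[OF z] by auto
    then show "closure (ball z \<rho>) \<inter> closure (ball z' \<rho>) = {}"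
      using \<rho> dist_triangle[of z z'] by (auto simp: dist_commute) (smt (verit) dist_triangle2)
  qed
qed

definition radial_projection :: "complex \<Rightarrow> real \<Rightarrow> complex \<Rightarrow> complex" where
  "radial_projection z0 \<rho> w = z0 + of_real (\<rho> / cmod (w - z0)) * (w - z0)"

lemma radial_projection_in_sphere:
  assumes "\<rho> > 0" "w \<noteq> z0"
  shows "radial_projection z0 \<rho> w \<in> sphere z0 \<rho>"
proof -
  have "cmod (w - z0) > 0"
    using assms(2) by simp
  then have "cmod (of_real (\<rho> / cmod (w - z0)) * (w - z0)) = \<rho>"
    using assms(1) by (simp add: norm_mult norm_divide abs_of_pos)
  then show ?thesis
    by (simp add: radial_projection_def dist_norm)
qed

lemma closed_segment_radial_projection:
  assumes \<rho>: "\<rho> > 0" and w: "w \<noteq> z0" "dist w z0 < \<rho>"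
  shows "closed_segment w (radial_projection z0 \<rho> w) \<subseteq> cball z0 \<rho> - {z0}"
proof
  fix x
  assume "x \<in> closed_segment w (radial_projection z0 \<rho> w)"
  then obtain u where u: "0 \<le> u" "u \<le> 1" "x = (1 - u) *\<^sub>R w + u *\<^sub>R radial_projection z0 \<rho> w"
    by (auto simp: closed_segment_def)
  define lam where "lam = \<rho> / cmod (w - z0)"
  define c where "c = (1 - u) + u * lam"
  have "lam \<ge> 1"
    using w \<rho> by (simp add: lam_def dist_norm field_simps)
  then have "u * 1 \<le> u * lam" "(1 - u) * 1 \<le> (1 - u) * lam"
    using u by (intro mult_left_mono; simp)+
  then have c: "1 \<le> c" "c \<le> lam"
    by (simp_all add: c_def algebra_simps)
  have "x - z0 = of_real c * (w - z0)"
    using u(3) by (simp add: radial_projection_def c_def lam_def scaleR_conv_of_real algebra_simps)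
  then have "dist z0 x = c * cmod (w - z0)"
    using c by (simp add: dist_norm norm_minus_commute norm_mult)
  moreover have "c * cmod (w - z0) \<le> \<rho>"
    using c w by (simp add: lam_def pos_le_divide_eq)
  moreover have "c * cmod (w - z0) > 0"
    using c w by simp
  ultimately show "x \<in> cball z0 \<rho> - {z0}"
    by auto
qed

lemma radial_retraction:
  fixes A :: "complex set"
  assumes \<rho>: "\<rho> > 0" and z0: "z0 \<notin> A" and cb: "cball z0 \<rho> - {z0} \<subseteq> A"
  obtains R where "continuous_on A R" "R \<in> A \<rightarrow> A - ball z0 \<rho>"
    "\<And>w. w \<in> A \<Longrightarrow> closed_segment w (R w) \<subseteq> A" "\<And>w. w \<in> A - ball z0 \<rho> \<Longrightarrow> R w = w"
proof -
  define R where "R w = (if dist w z0 < \<rho> then radial_projection z0 \<rho> w else w)" for w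
  have AU: "A = (A \<inter> cball z0 \<rho>) \<union> (A \<inter> - ball z0 \<rho>)"
    by auto
  have "continuous_on ((A \<inter> cball z0 \<rho>) \<union> (A \<inter> - ball z0 \<rho>))
      (\<lambda>w. if dist w z0 < \<rho> then radial_projection z0 \<rho> w else w)"
  proof (rule continuous_on_cases_local)
    show "closedin (top_of_set (A \<inter> cball z0 \<rho> \<union> A \<inter> - ball z0 \<rho>)) (A \<inter> cball z0 \<rho>)"
      using AU[symmetric] closedin_closed_Int[of "cball z0 \<rho>" A] by simp
    show "closedin (top_of_set (A \<inter> cball z0 \<rho> \<union> A \<inter> - ball z0 \<rho>)) (A \<inter> - ball z0 \<rho>)"
      using AU[symmetric] closedin_closed_Int[of "- ball z0 \<rho>" A] by (simp add: closed_Compl)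
    have "\<And>w. w \<in> A \<inter> cball z0 \<rho> \<Longrightarrow> cmod (w - z0) \<noteq> 0"
      using z0 by auto
    then show "continuous_on (A \<inter> cball z0 \<rho>) (radial_projection z0 \<rho>)"
      unfolding radial_projection_def by (intro continuous_intros) auto
    fix w
    assume "w \<in> A \<inter> cball z0 \<rho> \<and> \<not> dist w z0 < \<rho> \<or> w \<in> A \<inter> - ball z0 \<rho> \<and> dist w z0 < \<rho>"
    then have "dist w z0 = \<rho>"
      by (auto simp: dist_commute)
    then show "radial_projection z0 \<rho> w = w"
      using \<rho> by (simp add: radial_projection_def dist_norm)
  qed simp
  then have "continuous_on A R"
    using AU unfolding R_def by simp
  moreover have "R \<in> A \<rightarrow> A - ball z0 \<rho>"
  proof
    fix w
    assume w: "w \<in> A"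
    show "R w \<in> A - ball z0 \<rho>"
    proof (cases "dist w z0 < \<rho>")
      case True
      have "radial_projection z0 \<rho> w \<in> sphere z0 \<rho>"
        using w z0 \<rho> by (intro radial_projection_in_sphere) auto
      then show ?thesis
        using True cb \<rho> by (auto simp: R_def)
    qed (use w in \<open>auto simp: R_def dist_commute\<close>)
  qed
  moreover have "closed_segment w (R w) \<subseteq> A" if w: "w \<in> A" for w
  proof (cases "dist w z0 < \<rho>")
    case True
    moreover have "w \<noteq> z0"
      using w z0 by auto
    ultimately have "closed_segment w (radial_projection z0 \<rho> w) \<subseteq> A"
      using closed_segment_radial_projection[OF \<rho>, of w z0] cb by blast
    then show ?thesis
      using True by (simp add: R_def)
  qed (use w in \<open>simp add: R_def\<close>)
  ultimately show ?thesis
    by (rule that) (auto simp: R_def dist_commute)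
qed

lemma path_push_off_ball:
  fixes A :: "complex set"
  assumes "\<rho> > 0" "z0 \<notin> A" "cball z0 \<rho> - {z0} \<subseteq> A"
    and g: "path g" "path_image g \<subseteq> A" "pathstart g \<notin> ball z0 \<rho>" "pathfinish g \<notin> ball z0 \<rho>"
  obtains g' where "path g'" "path_image g' \<subseteq> A - ball z0 \<rho>" "homotopic_paths A g g'"
proof -
  obtain R where R: "continuous_on A R" "R \<in> A \<rightarrow> A - ball z0 \<rho>"
    "\<And>w. w \<in> A \<Longrightarrow> closed_segment w (R w) \<subseteq> A" "\<And>w. w \<in> A - ball z0 \<rho> \<Longrightarrow> R w = w"
    using radial_retraction[OF assms(1-3)] by blast
  have "path (R \<circ> g)"
    using g(1) continuous_on_subset[OF R(1) g(2)] by (rule path_continuous_image)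
  moreover have "path_image (R \<circ> g) \<subseteq> A - ball z0 \<rho>"
    using R(2) g(2) by (auto simp: path_image_def)
  moreover have "homotopic_paths A g (R \<circ> g)"
  proof (rule homotopic_paths_linear[OF g(1) \<open>path (R \<circ> g)\<close>])
    show "pathstart (R \<circ> g) = pathstart g" "pathfinish (R \<circ> g) = pathfinish g"
      using g R(4) pathstart_in_path_image[of g] pathfinish_in_path_image[of g]
      by (auto simp: pathstart_def pathfinish_def)
    show "closed_segment (g t) ((R \<circ> g) t) \<subseteq> A" if "t \<in> {0..1}" for t
    proof -
      have "g t \<in> A"
        using that g(2) by (auto simp: path_image_def)
      then show ?thesis
        using R(3) by simp
    qed
  qed
  ultimately show ?thesis
    using that by blast
qed

lemma path_avoiding_balls:
  assumes fin: "finite T" and sep: "well_separated T \<rho>"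
    and g: "path g" "path_image g \<subseteq> - T" "pathstart g \<notin> (\<Union>z\<in>T. ball z \<rho>)"
      "pathfinish g \<notin> (\<Union>z\<in>T. ball z \<rho>)"
  obtains g' where "path g'" "path_image g' \<subseteq> - (\<Union>z\<in>T. ball z \<rho>)" "homotopic_paths (- T) g g'"
proof -
  have \<rho>: "\<rho> > 0" and far: "\<And>z z'. z \<in> T \<Longrightarrow> z' \<in> T \<Longrightarrow> z \<noteq> z' \<Longrightarrow> dist z z' > 4 * \<rho>"
    using sep by (auto simp: well_separated_def)
  have "S \<subseteq> T \<Longrightarrow> \<exists>g'. path g' \<and> path_image g' \<subseteq> - T - (\<Union>z\<in>S. ball z \<rho>) \<and> homotopic_paths (- T) g g'"
    if "finite S" for S
    using that
  proof (induction S rule: finite_induct)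
    case empty
    then show ?case
      using g by (auto intro: homotopic_paths_refl)
  next
    case (insert z0 S)
    obtain g1 where g1: "path g1" "path_image g1 \<subseteq> - T - (\<Union>z\<in>S. ball z \<rho>)" "homotopic_paths (- T) g g1"
      using insert by auto
    have z0: "z0 \<in> T"
      using insert.prems by auto
    have "w \<in> - T - (\<Union>z\<in>S. ball z \<rho>)" if w: "w \<in> cball z0 \<rho> - {z0}" for w
    proof -
      have "w \<notin> T"
        using far[OF z0, of w] w \<rho> by auto
      moreover have "w \<notin> ball z \<rho>" if "z \<in> S" for z
      proof -
        have "z \<noteq> z0" "z \<in> T"
          using that insert by auto
        then have "dist z0 z > 4 * \<rho>"
          using far[OF z0] by auto
        then show ?thesis
          using w \<rho> dist_triangle[of z0 z w] by (auto simp: dist_commute)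
      qed
      ultimately show ?thesis
        by auto
    qed
    moreover have "pathstart g1 \<notin> ball z0 \<rho>" "pathfinish g1 \<notin> ball z0 \<rho>"
      using g(3,4) z0 homotopic_paths_imp_pathstart[OF g1(3)] homotopic_paths_imp_pathfinish[OF g1(3)] by auto
    ultimately obtain g2 where g2: "path g2" "path_image g2 \<subseteq> - T - (\<Union>z\<in>S. ball z \<rho>) - ball z0 \<rho>"
       "homotopic_paths (- T - (\<Union>z\<in>S. ball z \<rho>)) g1 g2"
      using path_push_off_ball[OF \<rho> _ _ g1(1,2)] z0 by (metis Diff_iff ComplD subsetI)
    have "homotopic_paths (- T) g g2"
      using g1(3) homotopic_paths_subset[OF g2(3)] homotopic_paths_trans by blast
    moreover have "path_image g2 \<subseteq> - T - (\<Union>z\<in>insert z0 S. ball z \<rho>)"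
      using g2(2) by auto
    ultimately show ?case
      using g2(1) by blast
  qed
  from this[OF fin subset_refl] show ?thesis
    using that by auto
qed

lemma square_around:
  fixes z :: complex
  assumes "\<rho> > 0"
  defines "a1 \<equiv> z - Complex \<rho> \<rho>" and "a3 \<equiv> z + Complex \<rho> \<rho>"
  shows "Re a1 < Re a3" "Im a1 < Im a3" "z \<in> box a1 a3" "cbox a1 a3 \<subseteq> cball z (2 * \<rho>)"
    "path_image (rectpath a1 a3) \<subseteq> cball z (2 * \<rho>) - ball z \<rho>"
proof -
  show a13: "Re a1 < Re a3" "Im a1 < Im a3" and "z \<in> box a1 a3"
    using assms(1) by (auto simp: a1_def a3_def in_box_complex_iff)
  show cb: "cbox a1 a3 \<subseteq> cball z (2 * \<rho>)"
  proof
    fix w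
    assume "w \<in> cbox a1 a3"
    then have "\<bar>Re (w - z)\<bar> \<le> \<rho>" "\<bar>Im (w - z)\<bar> \<le> \<rho>"
      by (auto simp: in_cbox_complex_iff a1_def a3_def)
    then show "w \<in> cball z (2 * \<rho>)"
      using cmod_le[of "w - z"] by (simp add: dist_norm norm_minus_commute)
  qed
  have image: "path_image (rectpath a1 a3) = cbox a1 a3 - box a1 a3"
    using a13 by (intro path_image_rectpath_cbox_minus_box) auto
  show "path_image (rectpath a1 a3) \<subseteq> cball z (2 * \<rho>) - ball z \<rho>"
  proof
    fix w
    assume w: "w \<in> path_image (rectpath a1 a3)"
    have "\<bar>Re (w - z)\<bar> \<ge> \<rho> \<or> \<bar>Im (w - z)\<bar> \<ge> \<rho>"
      using w image by (auto simp: in_cbox_complex_iff in_box_complex_iff a1_def a3_def)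
    then have "cmod (w - z) \<ge> \<rho>"
      using abs_Re_le_cmod[of "w - z"] abs_Im_le_cmod[of "w - z"] by linarith
    then show "w \<in> cball z (2 * \<rho>) - ball z \<rho>"
      using w cb image by (auto simp: dist_norm norm_minus_commute)
  qed
qed

section \<open>Configurations in small balls\<close>

locale ball_refinement =
  fixes P1 P2 :: "complex set" and \<rho> :: real and Y :: "complex set"
  assumes finite_P1: "finite P1" and finite_P2: "finite P2" and separated: "well_separated P1 \<rho>"
    and bp_far: "\<forall>z\<in>P1. bp \<notin> cball z (2 * \<rho>)"
    and P2_near: "P2 \<subseteq> (\<Union>z\<in>P1. ball z \<rho>)"
    and Y_far: "\<forall>z\<in>P1. z \<notin> Y \<longrightarrow> cball z (2 * \<rho>) \<inter> Y = {}"
begin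

lemma rho_pos: "\<rho> > 0"
  using separated by (simp add: well_separated_def)

lemma far: "z \<in> P1 \<Longrightarrow> z' \<in> P1 \<Longrightarrow> z \<noteq> z' \<Longrightarrow> dist z z' > 4 * \<rho>"
  using separated by (simp add: well_separated_def)

lemma isolating_balls: "isolating_nbhds P1 (\<lambda>z. ball z \<rho>)"
  using separated by (rule well_separated_isolating_nbhds)

lemma bp_notin_balls: "bp \<notin> (\<Union>z\<in>P1. ball z \<rho>)"
  using bp_far rho_pos by fastforce

lemma P1_subset_balls: "P1 \<subseteq> (\<Union>z\<in>P1. ball z \<rho>)"
  using rho_pos by auto

lemma bp_notin_P1: "bp \<notin> P1"
  using bp_notin_balls P1_subset_balls by blast

lemma bp_notin_P2: "bp \<notin> P2"
  using bp_notin_balls P2_near by blast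

lemma cball2_inter_P1: "z \<in> P1 \<Longrightarrow> cball z (2 * \<rho>) \<inter> P1 = {z}"
  using far rho_pos by fastforce

lemma cball2_notin_balls:
  assumes z: "z \<in> P1" and w: "w \<in> cball z (2 * \<rho>) - ball z \<rho>"
  shows "w \<notin> (\<Union>z\<in>P1. ball z \<rho>)"
proof
  assume "w \<in> (\<Union>z\<in>P1. ball z \<rho>)"
  then obtain z' where z': "z' \<in> P1" "dist z' w < \<rho>"
    by auto
  moreover have "z' \<noteq> z"
    using z' w by auto
  ultimately have "dist z z' > 4 * \<rho>"
    using far[OF z] by auto
  then show False
    using z' w dist_triangle[of z z' w] by (simp add: dist_commute)
qed

lemma Gpi_rep_avoiding_balls:
  assumes "x \<in> carrier (Gpi P1)"
  obtains g where "bp_loop P1 g" "path_image g \<subseteq> - (\<Union>z\<in>P1. ball z \<rho>)" "x = path_class P1 g"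
proof -
  obtain g0 where g0: "x = path_class P1 g0" "bp_loop P1 g0"
    using assms by (auto simp: carrier_Gpi)
  obtain g where g: "path g" "path_image g \<subseteq> - (\<Union>z\<in>P1. ball z \<rho>)" "homotopic_paths (- P1) g0 g"
    using path_avoiding_balls[OF finite_P1 separated, of g0] g0(2) bp_notin_balls
    unfolding bp_loop_def by auto
  have "bp_loop P1 g"
    using g g0(2) P1_subset_balls homotopic_paths_imp_pathstart homotopic_paths_imp_pathfinish
    unfolding bp_loop_def by fastforce
  moreover have "x = path_class P1 g"
    using g0(1) path_class_eqI[OF g(3)] by simp
  ultimately show ?thesis
    using that g by blast
qed

definition iota_balls :: "cls \<Rightarrow> cls" where
  "iota_balls = iota (\<lambda>z. ball z \<rho>) P1 P2"

lemma iota_balls_path_class: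
  "path g \<Longrightarrow> path_image g \<subseteq> - (\<Union>z\<in>P1. ball z \<rho>) \<Longrightarrow> iota_balls (path_class P1 g) = path_class P2 g"
  unfolding iota_balls_def by (rule iota_path_class[OF finite_P1 isolating_balls P2_near])

lemma iota_balls_one: "iota_balls \<one>\<^bsub>Gpi P1\<^esub> = \<one>\<^bsub>Gpi P2\<^esub>"
  unfolding one_Gpi using iota_balls_path_class[of "linepath bp bp"] bp_notin_balls by simp

lemma iota_balls_mult:
  assumes "x \<in> carrier (Gpi P1)" "y \<in> carrier (Gpi P1)"
  shows "iota_balls (x \<otimes>\<^bsub>Gpi P1\<^esub> y) = iota_balls x \<otimes>\<^bsub>Gpi P2\<^esub> iota_balls y"
proof -
  obtain g where g: "bp_loop P1 g" "path_image g \<subseteq> - (\<Union>z\<in>P1. ball z \<rho>)" "x = path_class P1 g"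
    using Gpi_rep_avoiding_balls[OF assms(1)] .
  obtain k where k: "bp_loop P1 k" "path_image k \<subseteq> - (\<Union>z\<in>P1. ball z \<rho>)" "y = path_class P1 k"
    using Gpi_rep_avoiding_balls[OF assms(2)] .
  have P2: "path_image g \<subseteq> - P2" "path_image k \<subseteq> - P2"
    using g(2) k(2) P2_near by blast+
  have "iota_balls (x \<otimes>\<^bsub>Gpi P1\<^esub> y) = iota_balls (path_class P1 (g +++ k))"
    using g k by (simp add: mult_Gpi bp_loop_def)
  also have "\<dots> = path_class P2 (g +++ k)"
    using g k by (intro iota_balls_path_class) (auto simp: bp_loop_def path_image_join)
  also have "\<dots> = path_class P2 g \<otimes>\<^bsub>Gpi P2\<^esub> path_class P2 k"
    using g k P2 by (subst mult_Gpi) (auto simp: bp_loop_def)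
  also have "\<dots> = iota_balls x \<otimes>\<^bsub>Gpi P2\<^esub> iota_balls y"
    using iota_balls_path_class g k by (simp add: bp_loop_def)
  finally show ?thesis .
qed

lemma iota_balls_foldr:
  "set gs \<subseteq> carrier (Gpi P1) \<Longrightarrow> iota_balls (foldr (\<lambda>a b. a \<otimes>\<^bsub>Gpi P1\<^esub> b) gs \<one>\<^bsub>Gpi P1\<^esub>)
     = foldr (\<lambda>a b. a \<otimes>\<^bsub>Gpi P2\<^esub> b) (map iota_balls gs) \<one>\<^bsub>Gpi P2\<^esub>"
proof (induction gs)
  case (Cons a gs)
  then show ?case
    using foldr_mult_Gpi_closed[OF bp_notin_P1, of gs] by (simp add: iota_balls_mult)
qed (simp add: iota_balls_one)

lemma small_loop_eq_rect_conj_avoiding_balls: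
  assumes z: "z \<in> P1" and s: "s \<in> small_loops P1 z"
  obtains \<gamma> where "path \<gamma>" "path_image \<gamma> \<subseteq> - (\<Union>z\<in>P1. ball z \<rho>)" "pathstart \<gamma> = bp"
    "pathfinish \<gamma> = z - Complex \<rho> \<rho>" "s = rect_conj P1 \<gamma> (z - Complex \<rho> \<rho>) (z + Complex \<rho> \<rho>)"
proof -
  interpret punctured_plane P1
    using finite_P1 bp_notin_P1 by unfold_locales
  obtain \<alpha> r where s: "s = path_class P1 (\<alpha> +++ reversepath (circlepath z r) +++ reversepath \<alpha>)"
    and r: "r > 0" "cball z r \<inter> P1 = {z}"
    and \<alpha>: "path \<alpha>" "path_image \<alpha> \<subseteq> - P1" "pathstart \<alpha> = bp" "pathfinish \<alpha> = z + r"
    using s unfolding small_loops_def path_class_def by auto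
  define a1 a3 where "a1 = z - Complex \<rho> \<rho>" and "a3 = z + Complex \<rho> \<rho>"
  note sq = square_around[OF rho_pos, of z, folded a1_def a3_def]
  define K where "K = cball z (max r (2 * \<rho>))"
  have "homotopic_paths (K - {z}) (reversepath (rectpath a1 a3))
      (linepath a1 (z + of_real r) +++ reversepath (circlepath z r) +++ reversepath (linepath a1 (z + of_real r)))"
    using sq r by (intro homotopic_paths_rectpath_circlepath) (auto simp: K_def)
  moreover have "K - {z} \<subseteq> - P1"
    using r(2) cball2_inter_P1[OF z] unfolding K_def by (cases "r \<le> 2 * \<rho>") (auto simp: max_def)
  ultimately have h: "homotopic_paths (- P1) (reversepath (rectpath a1 a3))
      (linepath a1 (z + of_real r) +++ reversepath (circlepath z r) +++ linepath (z + of_real r) a1)"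
    by (simp add: homotopic_paths_subset)
  have "s = rect_conj P1 (\<alpha> +++ linepath (z + of_real r) a1) a1 a3"
    unfolding s using \<alpha> h by (intro small_loop_eq_rect_conj) (auto simp: path_in_def)
  moreover have a1: "a1 \<notin> (\<Union>z\<in>P1. ball z \<rho>)"
    using sq(5) pathstart_in_path_image[of "rectpath a1 a3"] cball2_notin_balls[OF z] by auto
  moreover have \<beta>: "path (\<alpha> +++ linepath (z + of_real r) a1)" "path_image (\<alpha> +++ linepath (z + of_real r) a1) \<subseteq> - P1"
    using \<alpha> homotopic_paths_imp_subset[OF h] by (auto simp: path_image_join)
  then obtain \<gamma> where \<gamma>: "path \<gamma>" "path_image \<gamma> \<subseteq> - (\<Union>z\<in>P1. ball z \<rho>)"
    "homotopic_paths (- P1) (\<alpha> +++ linepath (z + of_real r) a1) \<gamma>"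
    using path_avoiding_balls[OF finite_P1 separated] \<alpha> a1 bp_notin_balls by (metis pathfinish_join pathstart_join pathfinish_linepath)
  ultimately show ?thesis
    using that[of \<gamma>] \<alpha> homotopic_paths_imp_pathstart[OF \<gamma>(3)] homotopic_paths_imp_pathfinish[OF \<gamma>(3)]
    by (simp add: a1_def a3_def rect_conj_def based_class_cong)
qed

lemma iota_balls_small_loop:
  assumes z: "z \<in> P1" "z \<notin> Y" and s: "s \<in> small_loops P1 z"
  shows "iota_balls s \<in> Qprods Y P2"
proof -
  interpret A: punctured_plane P1
    using finite_P1 bp_notin_P1 by unfold_locales
  interpret B: punctured_plane P2
    using finite_P2 bp_notin_P2 by unfold_locales
  define a1 a3 where "a1 = z - Complex \<rho> \<rho>" and "a3 = z + Complex \<rho> \<rho>"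
  note sq = square_around[OF rho_pos, of z, folded a1_def a3_def]
  obtain \<gamma> where \<gamma>: "path \<gamma>" "path_image \<gamma> \<subseteq> - (\<Union>z\<in>P1. ball z \<rho>)" "pathstart \<gamma> = bp" "pathfinish \<gamma> = a1"
    and s: "s = rect_conj P1 \<gamma> a1 a3"
    using small_loop_eq_rect_conj_avoiding_balls[OF z(1) s] unfolding a1_def a3_def .
  have R: "path_image (rectpath a1 a3) \<subseteq> - (\<Union>z\<in>P1. ball z \<rho>)"
    using sq(5) cball2_notin_balls[OF z(1)] by blast
  then have RP: "path_image (rectpath a1 a3) \<subseteq> - P1" "path_image (rectpath a1 a3) \<subseteq> - P2"
    using P1_subset_balls P2_near by blast+
  have \<gamma>P: "path_in (- P1) \<gamma>" "path_in (- P2) \<gamma>"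
    using \<gamma>(1,2) P1_subset_balls P2_near unfolding path_in_def by blast+
  have "iota_balls s = iota_balls (path_class P1 (\<gamma> +++ reversepath (rectpath a1 a3) +++ reversepath \<gamma>))"
    unfolding s using RP(1) \<gamma>P(1) \<gamma>(3,4) by (simp add: A.rect_conj_eq_path_class)
  also have "\<dots> = path_class P2 (\<gamma> +++ reversepath (rectpath a1 a3) +++ reversepath \<gamma>)"
    using \<gamma> R by (intro iota_balls_path_class) (auto simp: path_image_join)
  also have "\<dots> = rect_conj P2 \<gamma> a1 a3"
    using RP(2) \<gamma>P(2) \<gamma>(3,4) by (simp add: B.rect_conj_eq_path_class)
  also have "\<dots> \<in> Qprods Y P2"
    using sq(1,2,4) RP(2) \<gamma>P(2) \<gamma>(3,4) z Y_far by (intro B.rect_conj_in_Qprods) auto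
  finally show ?thesis .
qed

lemma iota_balls_Qprods:
  assumes "x \<in> Qprods Y P1"
  shows "iota_balls x \<in> Qprods Y P2"
proof -
  obtain gs where gs: "set gs \<subseteq> Qset Y P1" "x = foldr (\<lambda>a b. a \<otimes>\<^bsub>Gpi P1\<^esub> b) gs \<one>\<^bsub>Gpi P1\<^esub>"
    using assms by (auto simp: Qprods_def)
  have "iota_balls x = foldr (\<lambda>a b. a \<otimes>\<^bsub>Gpi P2\<^esub> b) (map iota_balls gs) \<one>\<^bsub>Gpi P2\<^esub>"
    unfolding gs(2) using gs(1) Qset_carrier[OF bp_notin_P1] by (intro iota_balls_foldr) blast
  moreover have "set (map iota_balls gs) \<subseteq> Qprods Y P2"
    using gs(1) iota_balls_one one_in_Qprods iota_balls_small_loop by (auto simp: Qset_def)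
  ultimately show ?thesis
    using foldr_mult_in_Qprods[OF bp_notin_P2] by simp
qed

end

section \<open>Normal neighbourhoods and the topology\<close>

lemma polyfun_diff: "f \<in> polyfun \<Longrightarrow> g \<in> polyfun \<Longrightarrow> (\<lambda>p. f p - g p) \<in> polyfun"
  using polyfun.pf_add[of f "\<lambda>p. -1 * g p"] polyfun.pf_mult[OF polyfun.pf_const, of g "-1"] by simp

lemma semialg_ball: "semialg (ball c r)"
proof -
  define f where "f = (\<lambda>p::real \<times> real. r\<^sup>2 - ((fst p - Re c) * (fst p - Re c) + (snd p - Im c) * (snd p - Im c)))"
  have "f \<in> polyfun"
    unfolding f_def
    by (intro polyfun_diff polyfun.pf_add polyfun.pf_mult polyfun.pf_const polyfun.pf_fst polyfun.pf_snd)
  moreover have "dist c z < r \<longleftrightarrow> f (Re z, Im z) > 0 \<and> r > 0" for z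
  proof -
    have "dist c z = sqrt ((Re z - Re c)\<^sup>2 + (Im z - Im c)\<^sup>2)"
      by (simp add: dist_norm cmod_def power2_commute)
    moreover have "sqrt S < r \<longleftrightarrow> S < r\<^sup>2 \<and> r > 0" if "S \<ge> 0" for S
    proof (cases "r > 0")
      case True
      then show ?thesis
        using real_sqrt_less_iff[of S "r\<^sup>2"] by simp
    next
      case False
      then have "\<not> sqrt S < r"
        using real_sqrt_ge_zero[OF that] by linarith
      then show ?thesis
        using False by simp
    qed
    ultimately show ?thesis
      by (simp add: f_def power2_eq_square)
  qed
  then have "ball c r = {z. f (Re z, Im z) > 0 \<and> (\<lambda>p. r) (Re z, Im z) > 0}"
    by auto
  ultimately have "basic_semialg (ball c r)"
    unfolding basic_semialg_def using polyfun.pf_const[of r]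
    by (intro exI[of _ "{}"] exI[of _ "{f, \<lambda>p. r}"]) auto
  then show ?thesis
    unfolding semialg_def by (intro exI[of _ "{ball c r}"]) auto
qed

lemma obtain_ball_radius:
  assumes fin: "finite P" and PX: "P \<subseteq> X" and Xu: "X \<subseteq> upper_half" and Z: "closedin (top_of_set X) Z"
    and W: "\<forall>z\<in>P. open (W z) \<and> z \<in> W z"
  obtains \<rho> where "well_separated P \<rho>" "\<forall>z\<in>P. cball z (2 * \<rho>) \<subseteq> W z" "\<forall>z\<in>P. bp \<notin> cball z (2 * \<rho>)"
    "\<forall>z\<in>P. z \<notin> Z \<longrightarrow> cball z (2 * \<rho>) \<inter> Z = {}"
proof -
  obtain C where C: "closed C" "Z = X \<inter> C"
    using Z closedin_closed by metis
  have "\<exists>e>0. cball z e \<subseteq> W z \<inter> - {bp} \<inter> (if z \<in> Z then UNIV else - C)" if z: "z \<in> P" for z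
  proof -
    have "open (W z \<inter> - {bp} \<inter> (if z \<in> Z then UNIV else - C))"
      using W z C(1) by (auto simp: open_Compl)
    moreover have "z \<in> W z \<inter> - {bp} \<inter> (if z \<in> Z then UNIV else - C)"
      using W z PX Xu bp_notin_upper_half C(2) by auto
    ultimately show ?thesis
      using open_contains_cball by blast
  qed
  then obtain e where e: "\<And>z. z \<in> P \<Longrightarrow> e z > 0 \<and> cball z (e z) \<subseteq> W z \<inter> - {bp} \<inter> (if z \<in> Z then UNIV else - C)"
    by metis
  define D where "D = {1} \<union> (\<lambda>z. e z / 2) ` P \<union> (\<lambda>(z, z'). dist z z' / 5) ` {(z, z'). z \<in> P \<and> z' \<in> P \<and> z \<noteq> z'}"
  have D: "finite D" "D \<noteq> {}"
    unfolding D_def using fin by (auto intro: finite_subset[of _ "P \<times> P"])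
  have "\<forall>d\<in>D. d > 0"
    unfolding D_def using e by auto
  then have \<rho>: "Min D > 0"
    using Min_in[OF D] by blast
  have "dist z z' > 4 * Min D" if "z \<in> P" "z' \<in> P" "z \<noteq> z'" for z z'
  proof -
    have "dist z z' / 5 \<in> D"
      unfolding D_def using that by force
    then show ?thesis
      using Min_le[OF D(1)] \<rho> by fastforce
  qed
  then have "well_separated P (Min D)"
    using \<rho> by (auto simp: well_separated_def)
  moreover have cb: "cball z (2 * Min D) \<subseteq> W z \<inter> - {bp} \<inter> (if z \<in> Z then UNIV else - C)" if "z \<in> P" for z
  proof -
    have "e z / 2 \<in> D"
      unfolding D_def using that by blast
    then have "cball z (2 * Min D) \<subseteq> cball z (e z)"
      using Min_le[OF D(1)] by fastforce
    then show ?thesis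
      using e[OF that] by blast
  qed
  then have "\<forall>z\<in>P. cball z (2 * Min D) \<subseteq> W z" "\<forall>z\<in>P. bp \<notin> cball z (2 * Min D)"
    by blast+
  moreover have "\<forall>z\<in>P. z \<notin> Z \<longrightarrow> cball z (2 * Min D) \<inter> Z = {}"
    using cb C(2) by fastforce
  ultimately show ?thesis
    by (rule that)
qed

lemma adapted_balls:
  assumes sep: "well_separated P \<rho>" and bp: "\<forall>z\<in>P. bp \<notin> cball z (2 * \<rho>)"
    and Z: "\<forall>z\<in>P. z \<notin> Z \<longrightarrow> cball z (2 * \<rho>) \<inter> Z = {}"
  shows "adapted Z P (\<lambda>z. ball z \<rho>)"
proof -
  have \<rho>: "\<rho> > 0"
    using sep by (simp add: well_separated_def)
  have U: "isolating_nbhds P (\<lambda>z. ball z \<rho>)"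
    using well_separated_isolating_nbhds[OF sep] .
  show ?thesis
    unfolding adapted_def
  proof (intro ballI conjI impI)
    fix z
    assume z: "z \<in> P"
    show "convex (ball z \<rho>)" "open (ball z \<rho>)" "semialg (ball z \<rho>)" "compact (closure (ball z \<rho>))"
      by (auto simp: semialg_ball)
    show "bp \<notin> closure (ball z \<rho>)"
      using bp z \<rho> by auto
    show "ball z \<rho> \<inter> P = {z}"
      using U z unfolding isolating_nbhds_def by blast
    have "closure (ball z \<rho>) \<subseteq> cball z (2 * \<rho>)"
      using \<rho> by auto
    then show "closure (ball z \<rho>) \<inter> Z = {}" if "z \<notin> Z"
      using Z z that by blast
    fix z'
    assume "z' \<in> P" "z' \<noteq> z"
    then show "closure (ball z \<rho>) \<inter> closure (ball z' \<rho>) = {}"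
      using U z unfolding isolating_nbhds_def by blast
  qed
qed

lemma mem_normal_nbhd:
  "(P', \<psi>', \<phi>') \<in> normal_nbhd X Z G (P, \<psi>, \<phi>) U \<longleftrightarrow>
     (P', \<psi>', \<phi>') \<in> Hur X Z G \<and> P' \<subseteq> \<Union>(U ` P) \<and> (\<forall>z \<in> P. P' \<inter> U z \<noteq> {}) \<and>
        (\<forall>x \<in> carrier (Gpi P). \<phi>' (iota U P P' x) = \<phi> x) \<and>
        (\<forall>x \<in> Qset Z P. psi_ext G Z P' \<psi>' (iota U P P' x) = \<psi> x)"
  by (simp add: normal_nbhd_def)

lemma adapted_disjoint: "adapted Z P U \<Longrightarrow> z \<in> P \<Longrightarrow> z' \<in> P \<Longrightarrow> w \<in> U z \<Longrightarrow> w \<in> U z' \<Longrightarrow> z = z'"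
  unfolding adapted_def using closure_subset by blast

lemma carrier_Gpi_nonempty:
  assumes "x \<in> carrier (Gpi P)"
  shows "x \<noteq> {}"
proof -
  obtain g where "x = path_class P g" "bp_loop P g"
    using assms by (auto simp: carrier_Gpi)
  then have "g \<in> x"
    using self_mem_path_class by (auto simp: bp_loop_def)
  then show ?thesis
    by blast
qed

text \<open>\<open>iota\<close> is undefined, namely \<open>{}\<close>, on classes without representatives outside the neighbourhoods.\<close>

lemma iota_empty_or_carrier:
  assumes fin: "finite P" and U: "isolating_nbhds P U" and P': "P' \<subseteq> \<Union>(U ` P)"
    and x: "x \<in> carrier (Gpi P)"
  shows "iota U P P' x = {} \<or> iota U P P' x \<in> carrier (Gpi P')"
proof (cases "\<exists>g\<in>x. path_image g \<subseteq> - \<Union>(U ` P)")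
  case True
  then obtain g where g: "g \<in> x" "path_image g \<subseteq> - \<Union>(U ` P)"
    by blast
  obtain g0 where g0: "x = path_class P g0" "bp_loop P g0"
    using x by (auto simp: carrier_Gpi)
  have h: "homotopic_paths (- P) g0 g"
    using g(1) g0(1) by (simp add: path_class_def)
  have "bp_loop P' g"
    using g0(2) h g(2) P' homotopic_paths_imp_path homotopic_paths_imp_pathstart homotopic_paths_imp_pathfinish
    unfolding bp_loop_def by fastforce
  moreover have "iota U P P' x = path_class P' g"
    using g0(1) path_class_eqI[OF h] g(2) h
    by (simp add: iota_path_class[OF fin U P'] homotopic_paths_imp_path)
  ultimately show ?thesis
    by (simp add: path_class_in_carrier)
qed (auto simp: iota_def)

context ball_refinement
begin

lemma iota_balls_self: "P2 = P1 \<Longrightarrow> x \<in> carrier (Gpi P1) \<Longrightarrow> iota_balls x = x"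
  by (metis Gpi_rep_avoiding_balls bp_loop_def iota_balls_path_class)

lemma iota_balls_extensional:
  assumes "\<phi>1 \<in> extensional (carrier (Gpi P1))" "\<phi>2 \<in> extensional (carrier (Gpi P2))"
    and "\<forall>y\<in>carrier (Gpi P1). \<phi>2 (iota_balls y) = \<phi>1 y" and "y = {} \<or> y \<in> carrier (Gpi P1)"
  shows "\<phi>2 (iota_balls y) = \<phi>1 y"
proof (cases "y = {}")
  case True
  have "{} \<notin> carrier (Gpi P1)" "{} \<notin> carrier (Gpi P2)"
    using carrier_Gpi_nonempty by blast+
  moreover have "iota_balls {} = {}"
    by (simp add: iota_balls_def iota_def)
  ultimately show ?thesis
    using True assms(1,2) by (simp add: extensional_def)
qed (use assms(3,4) in simp)

text \<open>In the \<open>\<psi>\<close>-condition, either \<open>iota\<close> lands in products of small loops, which \<open>iota_balls_Qprods\<close>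
  transports, or both sides are the same junk value of \<open>psi_ext\<close>.\<close>

lemma normal_nbhd_transfer:
  assumes Xu: "X \<subseteq> upper_half" and G: "group G"
    and c: "(P, \<psi>, \<phi>) \<in> Hur X Y G" and U: "adapted Y P U"
    and c1: "(P1, \<psi>1, \<phi>1) \<in> normal_nbhd X Y G (P, \<psi>, \<phi>) U"
    and sub: "\<forall>z\<in>P. \<forall>z1\<in>P1. z1 \<in> U z \<longrightarrow> ball z1 \<rho> \<subseteq> U z"
    and c2: "(P2, \<psi>2, \<phi>2) \<in> Hur X Y G" and meet: "\<forall>z1\<in>P1. P2 \<inter> ball z1 \<rho> \<noteq> {}"
    and phi: "\<forall>y\<in>carrier (Gpi P1). \<phi>2 (iota_balls y) = \<phi>1 y"
  shows "(P2, \<psi>2, \<phi>2) \<in> normal_nbhd X Y G (P, \<psi>, \<phi>) U"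
proof -
  note n1 = c1[unfolded mem_normal_nbhd]
  note h = Hur_memD[OF c] and h1 = Hur_memD[OF n1[THEN conjunct1]] and h2 = Hur_memD[OF c2]
  have P1U: "P1 \<subseteq> \<Union>(U ` P)"
    using n1 by blast
  have BU: "\<Union>((\<lambda>z. ball z \<rho>) ` P1) \<subseteq> \<Union>(U ` P)"
    using P1U sub by blast
  have comp: "iota U P P2 x = iota_balls (iota U P P1 x)" for x
    unfolding iota_balls_def using finite_P1 isolating_balls P1U BU P2_near by (rule iota_iota)
  have phi_ok: "\<phi>2 (iota U P P2 x) = \<phi> x" if x: "x \<in> carrier (Gpi P)" for x
    using iota_empty_or_carrier[OF h(1) adapted_imp_isolating_nbhds[OF U] P1U x] n1 x
      iota_balls_extensional[OF h1(4) h2(4) phi] by (simp add: comp)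
  have psi_ok: "psi_ext G Y P2 \<psi>2 (iota U P P2 x) = \<psi> x" if x: "x \<in> Qset Y P" for x
  proof (cases "iota U P P2 x \<in> Qprods Y P2")
    case True
    have "x \<in> carrier (Gpi P)"
      using x Qset_carrier[OF Hur_bp_notin[OF Xu c]] by blast
    then show ?thesis
      using True psi_ext_eq[OF bp_notin_P2 G h2(3) h2(8)] phi_ok h(8) x by simp
  next
    case False
    then have "iota U P P1 x \<notin> Qprods Y P1"
      using iota_balls_Qprods comp by metis
    then show ?thesis
      using False n1 x psi_ext_eq[OF bp_notin_P1 G h1(3) h1(8)] psi_ext_eq[OF bp_notin_P2 G h2(3) h2(8)]
      by auto
  qed
  have "\<forall>z\<in>P. P2 \<inter> U z \<noteq> {}"
    using n1 sub meet by blast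
  then show ?thesis
    unfolding mem_normal_nbhd using c2 P2_near BU phi_ok psi_ok by blast
qed

lemma self_mem_normal_nbhd_balls:
  assumes "P2 = P1" "group G" "(P1, \<psi>, \<phi>) \<in> Hur X Y G"
  shows "(P1, \<psi>, \<phi>) \<in> normal_nbhd X Y G (P1, \<psi>, \<phi>) (\<lambda>z. ball z \<rho>)"
proof -
  note h = Hur_memD[OF assms(3)]
  have id: "iota (\<lambda>z. ball z \<rho>) P1 P1 x = x" if "x \<in> carrier (Gpi P1)" for x
    using iota_balls_self[OF assms(1) that, unfolded iota_balls_def] assms(1) by simp
  have "psi_ext G Y P1 \<psi> x = \<psi> x" if "x \<in> Qset Y P1" for x
    using that psi_ext_eq[OF bp_notin_P1 assms(2) h(3) h(8)] h(8) Qset_subset_Qprods[OF bp_notin_P1] by auto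
  then show ?thesis
    unfolding mem_normal_nbhd using assms(3) P1_subset_balls rho_pos id Qset_carrier[OF bp_notin_P1]
    by (auto simp: subset_iff)
qed

end

lemma ball_refinement_self:
  assumes "finite P" "well_separated P \<rho>" "\<forall>z\<in>P. bp \<notin> cball z (2 * \<rho>)"
    "\<forall>z\<in>P. z \<notin> Z \<longrightarrow> cball z (2 * \<rho>) \<inter> Z = {}"
  shows "ball_refinement P P \<rho> Z"
proof -
  have "P \<subseteq> (\<Union>z\<in>P. ball z \<rho>)"
    using assms(2) by (auto simp: well_separated_def)
  then show ?thesis
    using assms by unfold_locales auto
qed

lemma topspace_Hur_top:
  assumes Xu: "X \<subseteq> upper_half" and G: "group G" and Z: "closedin (top_of_set X) Z"
  shows "topspace (Hur_top X Z G) = Hur X Z G"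
proof
  show "topspace (Hur_top X Z G) \<subseteq> Hur X Z G"
    unfolding Hur_top_def topology_generated_by_topspace
    by (auto simp: normal_nbhd_def split: prod.splits)
  show "Hur X Z G \<subseteq> topspace (Hur_top X Z G)"
  proof
    fix c
    assume c: "c \<in> Hur X Z G"
    obtain P \<psi> \<phi> where cc: "c = (P, \<psi>, \<phi>)"
      by (cases c)
    note h = Hur_memD[OF c[unfolded cc]]
    obtain \<rho> where \<rho>: "well_separated P \<rho>" "\<forall>z\<in>P. bp \<notin> cball z (2 * \<rho>)"
      "\<forall>z\<in>P. z \<notin> Z \<longrightarrow> cball z (2 * \<rho>) \<inter> Z = {}"
      using obtain_ball_radius[OF h(1,2) Xu Z, of "\<lambda>z. UNIV"] by auto
    interpret ball_refinement P P \<rho> Z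
      using ball_refinement_self[OF h(1) \<rho>] .
    have "c \<in> normal_nbhd X Z G c (\<lambda>z. ball z \<rho>)"
      unfolding cc using G c[unfolded cc] by (rule self_mem_normal_nbhd_balls[OF refl])
    moreover have "adapted Z P (\<lambda>z. ball z \<rho>)"
      using adapted_balls[OF \<rho>] .
    ultimately show "c \<in> topspace (Hur_top X Z G)"
      unfolding Hur_top_def topology_generated_by_topspace using c cc by force
  qed
qed

lemma obtain_ball_radius_within:
  assumes Xu: "X \<subseteq> upper_half" and Yc: "closedin (top_of_set X) Y" and U: "adapted Z P U"
    and P1: "finite P1" "P1 \<subseteq> X" "P1 \<subseteq> \<Union>(U ` P)"
  obtains \<rho> where "well_separated P1 \<rho>" "\<forall>z\<in>P1. bp \<notin> cball z (2 * \<rho>)"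
    "\<forall>z\<in>P1. z \<notin> Y \<longrightarrow> cball z (2 * \<rho>) \<inter> Y = {}" "\<forall>z\<in>P. \<forall>z1\<in>P1. z1 \<in> U z \<longrightarrow> ball z1 \<rho> \<subseteq> U z"
proof -
  define W where "W z1 = U (SOME z. z \<in> P \<and> z1 \<in> U z)" for z1
  have W: "W z1 = U z" if z: "z \<in> P" "z1 \<in> P1" "z1 \<in> U z" for z z1
  proof -
    have "\<exists>z. z \<in> P \<and> z1 \<in> U z"
      using z by blast
    then have "(SOME z. z \<in> P \<and> z1 \<in> U z) \<in> P \<and> z1 \<in> U (SOME z. z \<in> P \<and> z1 \<in> U z)"
      by (rule someI_ex)
    then have "(SOME z. z \<in> P \<and> z1 \<in> U z) = z"
      using adapted_disjoint[OF U _ z(1) _ z(3)] by blast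
    then show ?thesis
      by (simp add: W_def)
  qed
  have "\<forall>z1\<in>P1. open (W z1) \<and> z1 \<in> W z1"
  proof
    fix z1
    assume z1: "z1 \<in> P1"
    then obtain z where z: "z \<in> P" "z1 \<in> U z"
      using P1(3) by blast
    moreover have "open (U z)"
      using U z(1) by (simp add: adapted_def)
    ultimately show "open (W z1) \<and> z1 \<in> W z1"
      using W[OF z(1) z1 z(2)] by simp
  qed
  then obtain \<rho> where \<rho>: "well_separated P1 \<rho>" "\<forall>z\<in>P1. cball z (2 * \<rho>) \<subseteq> W z"
    "\<forall>z\<in>P1. bp \<notin> cball z (2 * \<rho>)" "\<forall>z\<in>P1. z \<notin> Y \<longrightarrow> cball z (2 * \<rho>) \<inter> Y = {}"
    using obtain_ball_radius[OF P1(1,2) Xu Yc] by blast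
  have "\<forall>z\<in>P. \<forall>z1\<in>P1. z1 \<in> U z \<longrightarrow> ball z1 \<rho> \<subseteq> U z"
  proof (intro ballI impI)
    fix z z1
    assume z: "z \<in> P" "z1 \<in> P1" "z1 \<in> U z"
    have "ball z1 \<rho> \<subseteq> cball z1 (2 * \<rho>)"
      using \<rho>(1) by (auto simp: well_separated_def)
    then show "ball z1 \<rho> \<subseteq> U z"
      using \<rho>(2) z W[OF z] by blast
  qed
  then show ?thesis
    by (rule that[OF \<rho>(1,3,4)])
qed


lemma Hur_top_preimage_normal_nbhd:
  assumes Xu: "X \<subseteq> upper_half" and G: "group G" and Yc: "closedin (top_of_set X) Y"
    and Z1: "Z1 = X \<or> Z1 = Y" and Z2: "Z2 = X \<or> Z2 = Y"
    and f_Hur: "\<forall>c\<in>Hur X Z1 G. f c \<in> Hur X Z2 G"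
    and f_shape: "\<And>P \<psi> \<phi>. \<exists>\<psi>'. f (P, \<psi>, \<phi>) = (P, \<psi>', \<phi>)"
    and c: "(P, \<psi>, \<phi>) \<in> Hur X Z2 G" and U: "adapted Z2 P U"
    and c1: "c1 \<in> Hur X Z1 G" "f c1 \<in> normal_nbhd X Z2 G (P, \<psi>, \<phi>) U"
  obtains T where "openin (Hur_top X Z1 G) T" "c1 \<in> T" "T \<subseteq> f -` normal_nbhd X Z2 G (P, \<psi>, \<phi>) U"
proof -
  obtain P1 \<psi>1 \<phi>1 where cc1: "c1 = (P1, \<psi>1, \<phi>1)"
    by (cases c1)
  note h1 = Hur_memD[OF c1(1)[unfolded cc1]]
  obtain \<psi>1' where f1: "f (P1, \<psi>1, \<phi>1) = (P1, \<psi>1', \<phi>1)"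
    using f_shape by blast
  have f1N: "(P1, \<psi>1', \<phi>1) \<in> normal_nbhd X Z2 G (P, \<psi>, \<phi>) U"
    using c1(2) unfolding cc1 f1 .
  then have P1U: "P1 \<subseteq> \<Union>(U ` P)"
    unfolding mem_normal_nbhd by (elim conjE)
  obtain \<rho> where \<rho>: "well_separated P1 \<rho>" "\<forall>z\<in>P1. bp \<notin> cball z (2 * \<rho>)"
    "\<forall>z\<in>P1. z \<notin> Y \<longrightarrow> cball z (2 * \<rho>) \<inter> Y = {}" and sub: "\<forall>z\<in>P. \<forall>z1\<in>P1. z1 \<in> U z \<longrightarrow> ball z1 \<rho> \<subseteq> U z"
    using obtain_ball_radius_within[OF Xu Yc U h1(1,2) P1U] by blast
  have \<rho>Z: "\<forall>z\<in>P1. z \<notin> Z \<longrightarrow> cball z (2 * \<rho>) \<inter> Z = {}" if "Z = X \<or> Z = Y" for Z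
    using that \<rho>(3) h1(2) by auto
  define T where "T = normal_nbhd X Z1 G c1 (\<lambda>z. ball z \<rho>)"
  have "openin (Hur_top X Z1 G) T"
    unfolding T_def Hur_top_def using c1(1) adapted_balls[OF \<rho>(1,2) \<rho>Z[OF Z1]] cc1
    by (intro topology_generated_by_Basis) force
  moreover have "c1 \<in> T"
  proof -
    interpret ball_refinement P1 P1 \<rho> Z1
      using ball_refinement_self[OF h1(1) \<rho>(1,2) \<rho>Z[OF Z1]] .
    show ?thesis
      unfolding T_def cc1 using G c1(1)[unfolded cc1] by (rule self_mem_normal_nbhd_balls[OF refl])
  qed
  moreover have "f c2 \<in> normal_nbhd X Z2 G (P, \<psi>, \<phi>) U" if "c2 \<in> T" for c2
  proof -
    obtain P2 \<psi>2 \<phi>2 where cc2: "c2 = (P2, \<psi>2, \<phi>2)"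
      by (cases c2)
    note n2 = that[unfolded T_def cc2 cc1 mem_normal_nbhd]
    obtain \<psi>2' where f2: "f (P2, \<psi>2, \<phi>2) = (P2, \<psi>2', \<phi>2)"
      using f_shape by blast
    have H2: "(P2, \<psi>2', \<phi>2) \<in> Hur X Z2 G"
      using f_Hur n2 f2 by metis
    interpret ball_refinement P1 P2 \<rho> Z2
      using h1(1) Hur_memD(1)[OF n2[THEN conjunct1]] \<rho>(1,2) \<rho>Z[OF Z2] n2 by unfold_locales auto
    have "(P2, \<psi>2', \<phi>2) \<in> normal_nbhd X Z2 G (P, \<psi>, \<phi>) U"
      using n2 by (intro normal_nbhd_transfer[OF Xu G c U f1N sub H2]) (auto simp: iota_balls_def)
    then show ?thesis
      using cc2 f2 by simp
  qed
  ultimately show ?thesis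
    using that by blast
qed

lemma continuous_map_Hur_top:
  assumes Xu: "X \<subseteq> upper_half" and G: "group G" and Yc: "closedin (top_of_set X) Y"
    and Z1: "Z1 = X \<or> Z1 = Y" and Z2: "Z2 = X \<or> Z2 = Y"
    and f_Hur: "\<forall>c\<in>Hur X Z1 G. f c \<in> Hur X Z2 G"
    and f_shape: "\<And>P \<psi> \<phi>. \<exists>\<psi>'. f (P, \<psi>, \<phi>) = (P, \<psi>', \<phi>)"
  shows "continuous_map (Hur_top X Z1 G) (Hur_top X Z2 G) f"
proof -
  have closed: "closedin (top_of_set X) Z1" "closedin (top_of_set X) Z2"
    using Z1 Z2 Yc by auto
  define B where "B = {normal_nbhd X Z2 G c U | c U. c \<in> Hur X Z2 G \<and> adapted Z2 (fst c) U}"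
  have top: "topspace (Hur_top X Z1 G) = Hur X Z1 G" "\<Union>B = Hur X Z2 G"
    using topspace_Hur_top[OF Xu G closed(1)] topspace_Hur_top[OF Xu G closed(2)]
    by (simp_all add: Hur_top_def B_def)
  show ?thesis
    unfolding Hur_top_def[of X Z2] B_def[symmetric]
  proof (rule continuous_on_generated_topo)
    show "f ` topspace (Hur_top X Z1 G) \<subseteq> \<Union>B"
      using f_Hur top by auto
    fix N
    assume "N \<in> B"
    then obtain P \<psi> \<phi> U where N: "N = normal_nbhd X Z2 G (P, \<psi>, \<phi>) U"
      and c: "(P, \<psi>, \<phi>) \<in> Hur X Z2 G" and U: "adapted Z2 P U"
      unfolding B_def by force
    show "openin (Hur_top X Z1 G) (f -` N \<inter> topspace (Hur_top X Z1 G))"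
    proof (subst openin_subopen, intro ballI)
      fix c1
      assume "c1 \<in> f -` N \<inter> topspace (Hur_top X Z1 G)"
      then obtain T where "openin (Hur_top X Z1 G) T" "c1 \<in> T" "T \<subseteq> f -` N"
        using Hur_top_preimage_normal_nbhd[OF Xu G Yc Z1 Z2 f_Hur f_shape c U] N top by blast
      then show "\<exists>T. openin (Hur_top X Z1 G) T \<and> c1 \<in> T \<and> T \<subseteq> f -` N \<inter> topspace (Hur_top X Z1 G)"
        using openin_subset by fastforce
    qed
  qed
qed

theorem lemma5p4:
  fixes X Y :: "complex set" and G :: "('g, 'b) monoid_scheme"
  assumes "nice_couple X Y" and "group G"
  shows "nc_morphism X Y X X (\<lambda>z. z)
       \<and> homeomorphic_map (Hur_top X Y G) (Hur_top X X G)
           (\<lambda>(P, \<psi>, \<phi>). (P, restrict \<psi> (Qset X P), \<phi>))"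
proof
  show "nc_morphism X Y X X (\<lambda>z. z)"
    using assms(1) by (rule nc_morphism_id)
  have Xu: "X \<subseteq> upper_half" and Yc: "closedin (top_of_set X) Y" and Xc: "closedin (top_of_set X) X"
    using assms(1) by (auto simp: nice_couple_def)
  have "continuous_map (Hur_top X Y G) (Hur_top X X G) (restrict_psi X)"
    using restrict_psi_in_Hur[OF Xu assms(2)]
    by (intro continuous_map_Hur_top[OF Xu assms(2) Yc]) (auto simp: restrict_psi_def)
  moreover have "continuous_map (Hur_top X X G) (Hur_top X Y G) (psi_of_phi Y)"
    using psi_of_phi_in_Hur[OF Xu assms(2)]
    by (intro continuous_map_Hur_top[OF Xu assms(2) Yc]) (auto simp: psi_of_phi_def)
  ultimately have "homeomorphic_maps (Hur_top X Y G) (Hur_top X X G) (restrict_psi X) (psi_of_phi Y)"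
    unfolding homeomorphic_maps_def
    using topspace_Hur_top[OF Xu assms(2) Yc] topspace_Hur_top[OF Xu assms(2) Xc]
      psi_of_phi_restrict_psi restrict_psi_psi_of_phi by fastforce
  then show "homeomorphic_map (Hur_top X Y G) (Hur_top X X G) (\<lambda>(P, \<psi>, \<phi>). (P, restrict \<psi> (Qset X P), \<phi>))"
    unfolding homeomorphic_map_maps restrict_psi_def[symmetric] by blast
qed

end
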